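(* Let $\mathbf{B}\in\mathbb{R}_+^{n\times n}$ with columns $\mathbf{b}_i$, $\omega\ge0$, $\boldsymbol{\lambda}_0$ a constant nonnegative vector, and $\mathbf{Q},\mathbf{S},\mathbf{F}$ symmetric matrices with nonnegative entries, $\mathbf{S}$ invertible. Consider the equation for $J(\boldsymbol{\lambda},t)$ $$0=J_t(\boldsymbol{\lambda},t)+[\omega\boldsymbol{\lambda}_0-\omega\boldsymbol{\lambda}]^T\nabla_{\boldsymbol{\lambda}}J(\boldsymbol{\lambda},t)+\boldsymbol{\lambda}^T\Delta_BJ-\tfrac12\boldsymbol{\lambda}^T\mathbf{Q}\boldsymbol{\lambda}-\tfrac12(\Delta_BJ)^T\mathbf{S}^{-1}\Delta_BJ,$$ with terminal condition $J(\boldsymbol{\lambda},t_f)=-\tfrac12\boldsymbol{\lambda}^T\mathbf{F}\boldsymbol{\lambda}$, where $(\Delta_BJ)_i=J(\boldsymbol{\lambda}+\mathbf{b}_i,t)-J(\boldsymbol{\lambda},t)$. Among polynomials in $\boldsymbol{\lambda}$ of finite degree (with time-varying coefficients), the only solution is the quadratic form $$J(\boldsymbol{\lambda},t)=f(t)+\mathbf{g}(t)^T\boldsymbol{\lambda}+\tfrac12\boldsymbol{\lambda}^T\mathbf{H}(t)\boldsymbol{\lambda},$$ where $\mathbf{H}(t)$ and $\mathbf{g}(t)$ solve, backward in time with $\mathbf{H}(t_f)=-\mathbf{F}$ and $\mathbf{g}(t_f)=\mathbf{0}$, $$\dot{\mathbf{H}}(t)=(\omega\mathbf{I}-\mathbf{B})^T\mathbf{H}(t)+\mathbf{H}(t)(\omega\mathbf{I}-\mathbf{B})+\mathbf{H}(t)\mathbf{B}\mathbf{S}^{-1}\mathbf{B}^T\mathbf{H}(t)+\mathbf{Q},$$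 $$\dot{\mathbf{g}}(t)=[\omega\mathbf{I}-\mathbf{B}^T+\mathbf{H}(t)\mathbf{B}\mathbf{S}^{-1}\mathbf{B}^T]\mathbf{g}(t)-\omega\mathbf{H}(t)\boldsymbol{\lambda}_0+\tfrac12[\mathbf{H}(t)\mathbf{B}\mathbf{S}^{-1}-\mathbf{I}]\,\mathrm{diag}(\mathbf{B}^T\mathbf{H}(t)\mathbf{B}).$$
   Context: $\mathrm{diag}(\mathbf{X})$ denotes the vector of diagonal entries of a square matrix $\mathbf{X}$. The equation is the Hamilton–Jacobi–Bellman equation of the activity maximization problem: the intensity $\boldsymbol{\lambda}$ of $n$ users' organic actions follows $d\boldsymbol{\lambda}=[\omega\boldsymbol{\lambda}_0-\omega\boldsymbol{\lambda}]dt+\mathbf{B}d\mathbf{N}+\mathbf{B}d\mathbf{P}$, where $\mathbf{P}$ counts directly incentivized actions with control intensity $\mathbf{u}(t)\ge0$, and one minimizes $\mathbb{E}[-\tfrac12\boldsymbol{\lambda}^T(t_f)\mathbf{F}\boldsymbol{\lambda}(t_f)+\int_{t_0}^{t_f}(-\tfrac12\boldsymbol{\lambda}^T\mathbf{Q}\boldsymbol{\lambda}+\tfrac12\mathbf{u}^T\mathbf{S}\mathbf{u})dt]$. *)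

theory Defs
  imports "HOL-Analysis.Analysis"
begin

definition diag_vec :: "real^'n^'n \<Rightarrow> real^'n" where
  "diag_vec X = (\<chi> i. X $ i $ i)"

definition col :: "real^'n^'n \<Rightarrow> 'n \<Rightarrow> real^'n" where
  "col B i = (\<chi> j. B $ j $ i)"

definition DeltaB :: "real^'n^'n \<Rightarrow> (real^'n \<Rightarrow> real \<Rightarrow> real) \<Rightarrow> real^'n \<Rightarrow> real \<Rightarrow> real^'n" where
  "DeltaB B J l t = (\<chi> i. J (l + col B i) t - J l t)"

definition poly_in_lambda :: "(real^'n \<Rightarrow> real \<Rightarrow> real) \<Rightarrow> real set \<Rightarrow> bool" where
  "poly_in_lambda J T \<longleftrightarrow>
     (\<exists>(d::nat) (c :: ('n \<Rightarrow> nat) \<Rightarrow> real \<Rightarrow> real).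
        \<forall>l. \<forall>t\<in>T. J l t =
          (\<Sum>\<alpha>\<in>{\<alpha>::'n \<Rightarrow> nat. (\<Sum>i\<in>UNIV. \<alpha> i) \<le> d}.
              c \<alpha> t * (\<Prod>i\<in>UNIV. (l $ i) ^ (\<alpha> i))))"

end

theory Submission
  imports Defs
begin

text \<open>
  Write \<open>J(\<lambda>, t) = \<Sum>\<^sub>\<alpha> c\<^sub>\<alpha>(t) \<lambda>\<^sup>\<alpha>\<close>. Mixed finite differences separate monomials, so each
  coefficient is a fixed linear combination of finitely many values of \<open>J\<close> and of coefficients
  of higher degree; hence the coefficients are differentiable in \<open>t\<close>.
  The drift and jump parts of the HJB operator do not raise the degree, and the jumps
  \<open>\<Delta>\<^sub>BJ\<close> lower it by one, so the quadratic term \<open>(\<Delta>\<^sub>BJ)\<^sup>T S\<^sup>-\<^sup>1 \<Delta>\<^sub>BJ\<close> has degree at most 2 as long as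
  all coefficients of degree \<open>\<ge> 3\<close> vanish. Comparing coefficients of degree \<open>\<ge> 3\<close> therefore gives
  an ODE system for them whose right-hand side is bounded by a multiple of their absolute values.
  They vanish at \<open>t\<^sub>f\<close>, because the terminal value is quadratic, and a Gronwall argument for the
  sum of their squares shows that they vanish on \<open>[t\<^sub>0, t\<^sub>f]\<close>.
  So \<open>J\<close> is quadratic, \<open>J = f + g\<^sup>T\<lambda> + \<lambda>\<^sup>TH\<lambda>/2\<close>, and comparing the linear and quadratic parts of the
  HJB identity, which is itself quadratic in \<open>\<lambda>\<close>, gives the Riccati equations for \<open>H\<close> and \<open>g\<close>;
  the terminal values of \<open>H\<close> and \<open>g\<close> are read off the terminal condition.
\<close>

section \<open>Polynomials in several real variables\<close>

definition monomial :: "('n::finite \<Rightarrow> nat) \<Rightarrow> real^'n \<Rightarrow> real" where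
  "monomial \<alpha> l = (\<Prod>i\<in>UNIV. (l $ i) ^ \<alpha> i)"

definition total_degree :: "('n::finite \<Rightarrow> nat) \<Rightarrow> nat" where
  "total_degree \<alpha> = (\<Sum>i\<in>UNIV. \<alpha> i)"

definition exponents_le :: "nat \<Rightarrow> ('n::finite \<Rightarrow> nat) set" where
  "exponents_le k = {\<alpha>. total_degree \<alpha> \<le> k}"

definition poly_deg_le :: "nat \<Rightarrow> (real^'n::finite \<Rightarrow> real) \<Rightarrow> bool" where
  "poly_deg_le k p \<longleftrightarrow> (\<exists>c. \<forall>l. p l = (\<Sum>\<alpha>\<in>exponents_le k. c \<alpha> * monomial \<alpha> l))"

lemma finite_exponents_le [simp]: "finite (exponents_le k :: ('n::finite \<Rightarrow> nat) set)"
proof (rule finite_subset)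
  show "exponents_le k \<subseteq> PiE (UNIV::'n set) (\<lambda>i. {..k})"
    by (auto simp: exponents_le_def total_degree_def PiE_def extensional_def Pi_def
        intro: order.trans[OF member_le_sum[of _ UNIV]])
qed (intro finite_PiE; simp)

lemma total_degree_add: "total_degree (\<lambda>i. \<alpha> i + \<beta> i) = total_degree \<alpha> + total_degree \<beta>"
  by (simp add: total_degree_def sum.distrib)

lemma monomial_add: "monomial (\<lambda>i. \<alpha> i + \<beta> i) l = monomial \<alpha> l * monomial \<beta> l"
  by (simp add: monomial_def power_add prod.distrib)

lemma monomial_total_degree_0: "total_degree \<alpha> = 0 \<Longrightarrow> monomial \<alpha> l = 1"
  by (simp add: total_degree_def monomial_def)

lemma monomial_total_degree_Suc:
  assumes "total_degree \<alpha> = Suc k"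
  obtains i \<alpha>' where "total_degree \<alpha>' = k" "\<And>l. monomial \<alpha> l = l $ i * monomial \<alpha>' l"
proof -
  have "\<alpha> \<noteq> (\<lambda>i. 0)"
    using assms by (auto simp: total_degree_def)
  then obtain i where i: "\<alpha> i \<noteq> 0"
    by auto
  define \<alpha>' where "\<alpha>' = \<alpha>(i := \<alpha> i - 1)"
  have rest: "(\<Sum>j\<in>UNIV-{i}. \<alpha>' j) = (\<Sum>j\<in>UNIV-{i}. \<alpha> j)"
    "(\<Prod>j\<in>UNIV-{i}. (l $ j) ^ \<alpha>' j) = (\<Prod>j\<in>UNIV-{i}. (l $ j) ^ \<alpha> j)" for l
    by (auto simp: \<alpha>'_def intro!: sum.cong prod.cong)
  have "total_degree \<alpha> = \<alpha> i + (\<Sum>j\<in>UNIV-{i}. \<alpha> j)"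
    "total_degree \<alpha>' = \<alpha>' i + (\<Sum>j\<in>UNIV-{i}. \<alpha>' j)"
    unfolding total_degree_def by (rule sum.remove; simp)+
  then have "total_degree \<alpha>' = k"
    using assms i rest by (simp add: \<alpha>'_def)
  moreover have "monomial \<alpha> l = l $ i * monomial \<alpha>' l" for l
  proof -
    have "monomial \<alpha> l = (l $ i) ^ \<alpha> i * (\<Prod>j\<in>UNIV-{i}. (l $ j) ^ \<alpha> j)"
      "monomial \<alpha>' l = (l $ i) ^ \<alpha>' i * (\<Prod>j\<in>UNIV-{i}. (l $ j) ^ \<alpha>' j)"
      unfolding monomial_def by (rule prod.remove; simp)+
    then show ?thesis
      using i rest by (cases "\<alpha> i") (auto simp: \<alpha>'_def)
  qed
  ultimately show ?thesis
    using that by blast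
qed

lemma sum_exponents_le_extend:
  assumes "k \<le> D"
  shows "(\<Sum>\<alpha>\<in>exponents_le D. (if \<alpha> \<in> exponents_le k then c \<alpha> else 0) * monomial \<alpha> l)
       = (\<Sum>\<alpha>\<in>exponents_le k. c \<alpha> * monomial \<alpha> l)"
proof -
  have "(\<Sum>\<alpha>\<in>exponents_le D. (if \<alpha> \<in> exponents_le k then c \<alpha> else 0) * monomial \<alpha> l)
      = (\<Sum>\<alpha>\<in>exponents_le D. if \<alpha> \<in> exponents_le k then c \<alpha> * monomial \<alpha> l else 0)"
    by (intro sum.cong) auto
  also have "\<dots> = (\<Sum>\<alpha>\<in>exponents_le D \<inter> exponents_le k. c \<alpha> * monomial \<alpha> l)"
    by (simp add: sum.inter_restrict)
  also have "exponents_le D \<inter> exponents_le k = exponents_le k"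
    using assms by (auto simp: exponents_le_def)
  finally show ?thesis .
qed

lemma poly_deg_le_mono:
  assumes "poly_deg_le k p" "k \<le> k'"
  shows "poly_deg_le k' p"
proof -
  obtain c where "\<forall>l. p l = (\<Sum>\<alpha>\<in>exponents_le k. c \<alpha> * monomial \<alpha> l)"
    using assms(1) by (auto simp: poly_deg_le_def)
  then show ?thesis
    unfolding poly_deg_le_def
    by (intro exI[of _ "\<lambda>\<alpha>. if \<alpha> \<in> exponents_le k then c \<alpha> else 0"])
       (simp add: sum_exponents_le_extend[OF assms(2)])
qed

lemma poly_deg_le_monomial:
  assumes "total_degree \<alpha> \<le> k"
  shows "poly_deg_le k (monomial \<alpha>)"
proof -
  have "exponents_le k \<inter> {\<beta>. \<beta> = \<alpha>} = {\<alpha>}"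
    using assms by (auto simp: exponents_le_def)
  then show ?thesis
    unfolding poly_deg_le_def by (intro exI[of _ "\<lambda>\<beta>. of_bool (\<beta> = \<alpha>)"]) simp
qed

lemma poly_deg_le_add:
  assumes "poly_deg_le k p" "poly_deg_le k q"
  shows "poly_deg_le k (\<lambda>l. p l + q l)"
proof -
  obtain c d where "\<forall>l. p l = (\<Sum>\<alpha>\<in>exponents_le k. c \<alpha> * monomial \<alpha> l)"
    "\<forall>l. q l = (\<Sum>\<alpha>\<in>exponents_le k. d \<alpha> * monomial \<alpha> l)"
    using assms by (auto simp: poly_deg_le_def)
  then show ?thesis
    unfolding poly_deg_le_def
    by (intro exI[of _ "\<lambda>\<alpha>. c \<alpha> + d \<alpha>"]) (simp add: algebra_simps sum.distrib)
qed

lemma poly_deg_le_cmult: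
  assumes "poly_deg_le k p"
  shows "poly_deg_le k (\<lambda>l. a * p l)"
proof -
  obtain c where "\<forall>l. p l = (\<Sum>\<alpha>\<in>exponents_le k. c \<alpha> * monomial \<alpha> l)"
    using assms by (auto simp: poly_deg_le_def)
  then show ?thesis
    unfolding poly_deg_le_def
    by (intro exI[of _ "\<lambda>\<alpha>. a * c \<alpha>"]) (simp add: sum_distrib_left mult.assoc)
qed

lemma poly_deg_le_const: "poly_deg_le k (\<lambda>l. a)"
proof -
  have "poly_deg_le k (monomial (\<lambda>i. 0))"
    by (rule poly_deg_le_monomial) (simp add: total_degree_def)
  then have "poly_deg_le k (\<lambda>l. a * monomial (\<lambda>i. 0) l)"
    by (rule poly_deg_le_cmult)
  then show ?thesis
    by (simp add: monomial_def)
qed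

lemma poly_deg_le_diff: "poly_deg_le k p \<Longrightarrow> poly_deg_le k q \<Longrightarrow> poly_deg_le k (\<lambda>l. p l - q l)"
  using poly_deg_le_add[of k p "\<lambda>l. -1 * q l"] poly_deg_le_cmult[of k q "-1"] by simp

lemma poly_deg_le_sum:
  "finite A \<Longrightarrow> (\<And>a. a \<in> A \<Longrightarrow> poly_deg_le k (p a)) \<Longrightarrow> poly_deg_le k (\<lambda>l. \<Sum>a\<in>A. p a l)"
  by (induction A rule: finite_induct) (auto intro: poly_deg_le_const poly_deg_le_add)

lemma poly_deg_le_mult:
  assumes "poly_deg_le a p" "poly_deg_le b q"
  shows "poly_deg_le (a + b) (\<lambda>l. p l * q l)"
proof -
  obtain c d where c: "\<forall>l. p l = (\<Sum>\<alpha>\<in>exponents_le a. c \<alpha> * monomial \<alpha> l)"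
    and d: "\<forall>l. q l = (\<Sum>\<beta>\<in>exponents_le b. d \<beta> * monomial \<beta> l)"
    using assms by (auto simp: poly_deg_le_def)
  have "p l * q l = (\<Sum>\<alpha>\<in>exponents_le a. \<Sum>\<beta>\<in>exponents_le b.
           (c \<alpha> * d \<beta>) * monomial (\<lambda>i. \<alpha> i + \<beta> i) l)" for l
    by (simp add: c d sum_product monomial_add mult_ac)
  then show ?thesis
    by (simp only:) (intro poly_deg_le_sum finite_exponents_le poly_deg_le_cmult poly_deg_le_monomial,
        auto simp: exponents_le_def total_degree_add)
qed

lemma poly_deg_le_prod:
  "finite I \<Longrightarrow> (\<And>i. i \<in> I \<Longrightarrow> poly_deg_le (k i) (p i)) \<Longrightarrow>
   poly_deg_le (\<Sum>i\<in>I. k i) (\<lambda>l. \<Prod>i\<in>I. p i l)"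
  by (induction I rule: finite_induct) (auto intro: poly_deg_le_const poly_deg_le_mult)

lemma poly_deg_le_power: "poly_deg_le k p \<Longrightarrow> poly_deg_le (m * k) (\<lambda>l. p l ^ m)"
  using poly_deg_le_prod[of "{..<m}" "\<lambda>_. k" "\<lambda>_. p"] by (simp add: mult.commute)

lemma poly_deg_le_component: "poly_deg_le 1 (\<lambda>l. l $ i)"
proof -
  define \<alpha> :: "_ \<Rightarrow> nat" where "\<alpha> j = of_bool (j = i)" for j
  have "monomial \<alpha> = (\<lambda>l. l $ i)"
  proof
    fix l
    have "monomial \<alpha> l = (\<Prod>j\<in>UNIV. if j = i then l $ j else 1)"
      unfolding monomial_def by (intro prod.cong) (auto simp: \<alpha>_def)
    then show "monomial \<alpha> l = l $ i"
      by (simp add: prod.delta)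
  qed
  moreover have "total_degree \<alpha> = 1"
    by (simp add: total_degree_def \<alpha>_def)
  ultimately show ?thesis
    using poly_deg_le_monomial[of \<alpha> 1] by simp
qed

lemma poly_deg_le_shift:
  assumes "poly_deg_le k p"
  shows "poly_deg_le k (\<lambda>l. p (l + b))"
proof -
  obtain c where c: "\<forall>l. p l = (\<Sum>\<alpha>\<in>exponents_le k. c \<alpha> * monomial \<alpha> l)"
    using assms by (auto simp: poly_deg_le_def)
  have "poly_deg_le k (\<lambda>l. monomial \<alpha> (l + b))" if "\<alpha> \<in> exponents_le k" for \<alpha>
  proof -
    have "poly_deg_le (\<Sum>i\<in>UNIV. \<alpha> i * 1) (\<lambda>l. \<Prod>i\<in>UNIV. (l $ i + b $ i) ^ \<alpha> i)"
      by (intro poly_deg_le_prod poly_deg_le_power poly_deg_le_add poly_deg_le_component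
          poly_deg_le_const) auto
    then show ?thesis
      using that by (auto simp: monomial_def exponents_le_def total_degree_def intro: poly_deg_le_mono)
  qed
  then show ?thesis
    using c by (simp only:) (intro poly_deg_le_sum finite_exponents_le poly_deg_le_cmult)
qed

lemma poly_deg_le_inner:
  assumes "\<And>i. poly_deg_le a (\<lambda>l. u l $ i)" "\<And>i. poly_deg_le b (\<lambda>l. v l $ i)"
  shows "poly_deg_le (a + b) (\<lambda>l. u l \<bullet> v l)"
  unfolding inner_vec_def by (simp, intro poly_deg_le_sum poly_deg_le_mult assms) auto

lemma poly_deg_le_matrix_vector_mult:
  assumes "\<And>i. poly_deg_le a (\<lambda>l. v l $ i)"
  shows "poly_deg_le a (\<lambda>l. (M *v v l) $ i)"
  unfolding matrix_vector_mult_def by (simp, intro poly_deg_le_sum poly_deg_le_cmult assms) auto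

lemma poly_deg_le_quadratic_form: "poly_deg_le 2 (\<lambda>l. l \<bullet> (M *v l))"
proof -
  have "poly_deg_le (1 + 1) (\<lambda>l. l \<bullet> (M *v l))"
    by (intro poly_deg_le_inner poly_deg_le_matrix_vector_mult poly_deg_le_component)
  then show ?thesis
    by (simp add: numeral_2_eq_2)
qed

lemma poly_deg_le_monomial_shift_diff:
  "poly_deg_le (total_degree \<alpha> - 1) (\<lambda>l. monomial \<alpha> (l + b) - monomial \<alpha> l)"
proof (induction "total_degree \<alpha>" arbitrary: \<alpha>)
  case 0
  then show ?case
    by (simp add: monomial_total_degree_0 poly_deg_le_const)
next
  case (Suc k)
  obtain i \<alpha>' where \<alpha>': "total_degree \<alpha>' = k" "\<And>l. monomial \<alpha> l = l $ i * monomial \<alpha>' l"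
    using monomial_total_degree_Suc[OF Suc.hyps(2)[symmetric]] by blast
  have split: "monomial \<alpha> (l + b) - monomial \<alpha> l
      = l $ i * (monomial \<alpha>' (l + b) - monomial \<alpha>' l) + b $ i * monomial \<alpha>' (l + b)" for l
    by (simp add: \<alpha>'(2) algebra_simps)
  have deg: "total_degree \<alpha> - 1 = k"
    using Suc.hyps(2) by simp
  show ?case
  proof (cases "k = 0")
    case True
    then show ?thesis
      using \<alpha>' by (simp add: split monomial_total_degree_0 poly_deg_le_const)
  next
    case False
    have "poly_deg_le (1 + (k - 1)) (\<lambda>l. l $ i * (monomial \<alpha>' (l + b) - monomial \<alpha>' l))"
      using Suc.hyps(1)[of \<alpha>'] \<alpha>'(1) by (intro poly_deg_le_mult poly_deg_le_component) simp
    moreover have "poly_deg_le k (\<lambda>l. b $ i * monomial \<alpha>' (l + b))"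
      using \<alpha>'(1) by (intro poly_deg_le_cmult poly_deg_le_shift poly_deg_le_monomial) simp
    ultimately have "poly_deg_le k
        (\<lambda>l. l $ i * (monomial \<alpha>' (l + b) - monomial \<alpha>' l) + b $ i * monomial \<alpha>' (l + b))"
      using False by (intro poly_deg_le_add) simp_all
    then show ?thesis
      unfolding split deg .
  qed
qed

definition monomial_deriv :: "('n::finite \<Rightarrow> nat) \<Rightarrow> real^'n \<Rightarrow> real^'n \<Rightarrow> real" where
  "monomial_deriv \<alpha> l y =
     (\<Sum>i\<in>UNIV. (of_nat (\<alpha> i) * y $ i * (l $ i) ^ (\<alpha> i - 1)) * (\<Prod>j\<in>UNIV-{i}. (l $ j) ^ \<alpha> j))"

lemma has_derivative_monomial: "(monomial \<alpha> has_derivative monomial_deriv \<alpha> l) (at l)"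
proof -
  have "((\<lambda>x. x $ i) has_derivative (\<lambda>y. y $ i)) (at l)" for i
    by (rule bounded_linear_imp_has_derivative) (rule bounded_linear_vec_nth)
  then have "((\<lambda>x. \<Prod>i\<in>UNIV. (x $ i) ^ \<alpha> i) has_derivative monomial_deriv \<alpha> l) (at l)"
    unfolding monomial_deriv_def[abs_def] by (intro has_derivative_prod has_derivative_power)
  then show ?thesis
    unfolding monomial_def[abs_def] .
qed

lemma poly_deg_le_monomial_deriv:
  assumes "\<And>i. poly_deg_le 1 (\<lambda>l. v l $ i)"
  shows "poly_deg_le (total_degree \<alpha>) (\<lambda>l. monomial_deriv \<alpha> l (v l))"
  unfolding monomial_deriv_def
proof (intro poly_deg_le_sum, simp)
  fix i
  show "poly_deg_le (total_degree \<alpha>) (\<lambda>l. of_nat (\<alpha> i) * v l $ i * (l $ i) ^ (\<alpha> i - 1)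
      * (\<Prod>j\<in>UNIV-{i}. (l $ j) ^ \<alpha> j))"
  proof (cases "\<alpha> i = 0")
    case True
    then show ?thesis
      by (simp add: poly_deg_le_const)
  next
    case False
    have "total_degree \<alpha> = \<alpha> i + (\<Sum>j\<in>UNIV-{i}. \<alpha> j)"
      unfolding total_degree_def by (rule sum.remove) auto
    then have "total_degree \<alpha> = 1 + (\<alpha> i - 1) * 1 + (\<Sum>j\<in>UNIV-{i}. \<alpha> j * 1)"
      using False by simp
    moreover have "poly_deg_le (1 + (\<alpha> i - 1) * 1 + (\<Sum>j\<in>UNIV-{i}. \<alpha> j * 1))
        (\<lambda>l. v l $ i * (l $ i) ^ (\<alpha> i - 1) * (\<Prod>j\<in>UNIV-{i}. (l $ j) ^ \<alpha> j))"
      by (intro poly_deg_le_mult poly_deg_le_power poly_deg_le_prod assms poly_deg_le_component) simp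
    ultimately show ?thesis
      using poly_deg_le_cmult[of _ _ "of_nat (\<alpha> i)"] by (simp add: mult.assoc)
  qed
qed

text \<open>\<open>(-1)\<^sup>a\<close> times the \<open>a\<close>-th forward difference of \<open>x\<^sup>b\<close> at 0; it vanishes for \<open>b < a\<close>.\<close>
definition alt_binomial_power_sum :: "nat \<Rightarrow> nat \<Rightarrow> real" where
  "alt_binomial_power_sum a b = (\<Sum>g\<le>a. (-1) ^ g * real (a choose g) * real g ^ b)"

lemma alt_binomial_power_sum_Suc:
  "alt_binomial_power_sum (Suc a) b = - (\<Sum>k<b. real (b choose k) * alt_binomial_power_sum a k)"
proof -
  let ?G = alt_binomial_power_sum
  have shift: "?G a b = 0 ^ b + (\<Sum>h\<le>a. (-1) ^ Suc h * real (a choose Suc h) * real (Suc h) ^ b)"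
  proof -
    have "?G a b = (\<Sum>g\<le>Suc a. (-1) ^ g * real (a choose g) * real g ^ b)"
      unfolding alt_binomial_power_sum_def by (simp add: binomial_eq_0)
    then show ?thesis
      by (subst (asm) sum.atMost_Suc_shift) simp
  qed
  have binomial: "real (Suc h) ^ b = real h ^ b + (\<Sum>k<b. real (b choose k) * real h ^ k)" for h
  proof -
    have "real (Suc h) ^ b = (\<Sum>k\<le>b. real (b choose k) * real h ^ k * 1 ^ (b - k))"
      using binomial_ring[of "real h" 1 b] by (simp add: add.commute)
    then show ?thesis
      by (simp add: lessThan_Suc_atMost[symmetric])
  qed
  have "(\<Sum>h\<le>a. (-1) ^ h * real (a choose h) * real (Suc h) ^ b)
      = ?G a b + (\<Sum>h\<le>a. \<Sum>k<b. real (b choose k) * ((-1) ^ h * real (a choose h) * real h ^ k))"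
    unfolding alt_binomial_power_sum_def binomial
    by (simp add: algebra_simps sum.distrib sum_distrib_left)
  also have "(\<Sum>h\<le>a. \<Sum>k<b. real (b choose k) * ((-1) ^ h * real (a choose h) * real h ^ k))
      = (\<Sum>k<b. real (b choose k) * ?G a k)"
    unfolding alt_binomial_power_sum_def by (subst sum.swap) (simp add: sum_distrib_left)
  finally have pascal_left: "(\<Sum>h\<le>a. (-1) ^ h * real (a choose h) * real (Suc h) ^ b)
      = ?G a b + (\<Sum>k<b. real (b choose k) * ?G a k)" .
  have "?G (Suc a) b = 0 ^ b + (\<Sum>h\<le>a. (-1) ^ Suc h * real (Suc a choose Suc h) * real (Suc h) ^ b)"
    unfolding alt_binomial_power_sum_def by (subst sum.atMost_Suc_shift) simp
  also have "\<dots> = 0 ^ b - (\<Sum>h\<le>a. (-1) ^ h * real (a choose h) * real (Suc h) ^ b)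
      + (\<Sum>h\<le>a. (-1) ^ Suc h * real (a choose Suc h) * real (Suc h) ^ b)"
    by (simp add: sum.distrib[symmetric] sum_subtractf[symmetric] algebra_simps)
  finally show ?thesis
    using shift pascal_left by simp
qed

lemma alt_binomial_power_sum_triangular:
  "(\<forall>b<a. alt_binomial_power_sum a b = 0) \<and> alt_binomial_power_sum a a = (-1) ^ a * fact a"
proof (induction a)
  case 0
  then show ?case
    by (simp add: alt_binomial_power_sum_def)
next
  case (Suc a)
  have "(\<Sum>k<b. real (b choose k) * alt_binomial_power_sum a k) = 0" if "b < Suc a" for b
    using Suc.IH that by (intro sum.neutral) auto
  moreover have "(\<Sum>k<Suc a. real (Suc a choose k) * alt_binomial_power_sum a k)
      = real (Suc a) * ((-1) ^ a * fact a)"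
    using Suc.IH by (simp add: sum.neutral binomial_Suc_n)
  ultimately show ?case
    by (simp add: alt_binomial_power_sum_Suc)
qed

text \<open>Up to sign, the iterated forward difference \<open>\<Delta>\<^sup>\<alpha>f(0)\<close>; it annihilates every monomial whose
  exponent does not dominate \<open>\<alpha>\<close>.\<close>
definition mixed_difference :: "('n::finite \<Rightarrow> nat) \<Rightarrow> (real^'n \<Rightarrow> real) \<Rightarrow> real" where
  "mixed_difference \<alpha> f = (\<Sum>\<gamma>\<in>PiE UNIV (\<lambda>i. {..\<alpha> i}).
     (\<Prod>i\<in>UNIV. (-1) ^ \<gamma> i * real (\<alpha> i choose \<gamma> i)) * f (\<chi> i. real (\<gamma> i)))"

lemma mixed_difference_monomial:
  "mixed_difference \<alpha> (monomial \<beta>) = (\<Prod>i\<in>UNIV. alt_binomial_power_sum (\<alpha> i) (\<beta> i))"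
proof -
  have "mixed_difference \<alpha> (monomial \<beta>) = (\<Sum>\<gamma>\<in>PiE UNIV (\<lambda>i. {..\<alpha> i}).
      \<Prod>i\<in>UNIV. (-1) ^ \<gamma> i * real (\<alpha> i choose \<gamma> i) * real (\<gamma> i) ^ \<beta> i)"
    unfolding mixed_difference_def monomial_def by (simp add: prod.distrib)
  also have "\<dots> = (\<Prod>i\<in>UNIV. \<Sum>g\<le>\<alpha> i. (-1) ^ g * real (\<alpha> i choose g) * real g ^ \<beta> i)"
    by (subst prod_sum_PiE) auto
  finally show ?thesis
    by (simp add: alt_binomial_power_sum_def)
qed

lemma mixed_difference_sum:
  "mixed_difference \<alpha> (\<lambda>l. \<Sum>\<beta>\<in>A. c \<beta> * f \<beta> l) = (\<Sum>\<beta>\<in>A. c \<beta> * mixed_difference \<alpha> (f \<beta>))"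
proof -
  define w where "w \<gamma> = (\<Prod>i\<in>UNIV. (-1) ^ \<gamma> i * real (\<alpha> i choose \<gamma> i))" for \<gamma> :: "'a \<Rightarrow> nat"
  have "mixed_difference \<alpha> (\<lambda>l. \<Sum>\<beta>\<in>A. c \<beta> * f \<beta> l)
      = (\<Sum>\<gamma>\<in>PiE UNIV (\<lambda>i. {..\<alpha> i}). \<Sum>\<beta>\<in>A. c \<beta> * (w \<gamma> * f \<beta> (\<chi> i. real (\<gamma> i))))"
    unfolding mixed_difference_def w_def by (simp add: sum_distrib_left sum_distrib_right mult_ac)
  also have "\<dots> = (\<Sum>\<beta>\<in>A. \<Sum>\<gamma>\<in>PiE UNIV (\<lambda>i. {..\<alpha> i}). c \<beta> * (w \<gamma> * f \<beta> (\<chi> i. real (\<gamma> i))))"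
    by (rule sum.swap)
  finally show ?thesis
    unfolding mixed_difference_def w_def by (simp add: sum_distrib_left)
qed

lemma mixed_difference_monomial_eq_0:
  "\<not> (\<forall>i. \<alpha> i \<le> \<beta> i) \<Longrightarrow> mixed_difference \<alpha> (monomial \<beta>) = 0"
  using alt_binomial_power_sum_triangular by (auto simp: mixed_difference_monomial not_le)

lemma mixed_difference_monomial_self: "mixed_difference \<alpha> (monomial \<alpha>) \<noteq> 0"
  using alt_binomial_power_sum_triangular by (simp add: mixed_difference_monomial)

lemma total_degree_less:
  "(\<forall>i. \<alpha> i \<le> \<beta> i) \<Longrightarrow> \<alpha> \<noteq> \<beta> \<Longrightarrow> total_degree \<alpha> < total_degree \<beta>"
  unfolding total_degree_def
  by (intro sum_strict_mono_ex1) (auto simp: fun_eq_iff intro: le_neq_trans)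

lemma mixed_difference_monomial_sum:
  assumes "finite A" "\<alpha> \<in> A"
  shows "mixed_difference \<alpha> (\<lambda>l. \<Sum>\<beta>\<in>A. c \<beta> * monomial \<beta> l)
    = c \<alpha> * mixed_difference \<alpha> (monomial \<alpha>)
      + (\<Sum>\<beta>\<in>{\<beta>\<in>A. total_degree \<alpha> < total_degree \<beta>}. c \<beta> * mixed_difference \<alpha> (monomial \<beta>))"
proof -
  let ?e = "\<lambda>\<beta>. c \<beta> * mixed_difference \<alpha> (monomial \<beta>)"
  have "mixed_difference \<alpha> (monomial \<beta>) = 0"
    if "\<beta> \<noteq> \<alpha>" "\<not> total_degree \<alpha> < total_degree \<beta>" for \<beta>
    using mixed_difference_monomial_eq_0 total_degree_less that by blast
  then have "(\<Sum>\<beta>\<in>A - {\<alpha>}. ?e \<beta>) = (\<Sum>\<beta>\<in>{\<beta>\<in>A. total_degree \<alpha> < total_degree \<beta>}. ?e \<beta>)"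
    using assms(1) by (intro sum.mono_neutral_cong) auto
  then show ?thesis
    using sum.remove[OF assms, of ?e] by (simp add: mixed_difference_sum)
qed

lemma monomial_coeffs_eq_0:
  assumes A: "finite A" and zero: "\<And>l. (\<Sum>\<beta>\<in>A. c \<beta> * monomial \<beta> l) = 0" and "\<beta> \<in> A"
  shows "c \<beta> = 0"
proof (rule ccontr)
  define Z where "Z = {\<beta>\<in>A. c \<beta> \<noteq> 0}"
  assume "c \<beta> \<noteq> 0"
  then have "Z \<noteq> {}" "finite Z"
    using A \<open>\<beta> \<in> A\<close> by (auto simp: Z_def)
  then have "Max (total_degree ` Z) \<in> total_degree ` Z"
    by (intro Max_in) auto
  then obtain \<alpha> where \<alpha>: "Max (total_degree ` Z) = total_degree \<alpha>" "\<alpha> \<in> Z"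
    by (rule imageE)
  have max: "total_degree \<beta> \<le> total_degree \<alpha>" if "\<beta> \<in> Z" for \<beta>
    unfolding \<alpha>(1)[symmetric] using \<open>finite Z\<close> that by (intro Max_ge) auto
  have "0 = mixed_difference \<alpha> (\<lambda>l. \<Sum>\<beta>\<in>A. c \<beta> * monomial \<beta> l)"
    unfolding mixed_difference_def zero by simp
  also have "\<dots> = c \<alpha> * mixed_difference \<alpha> (monomial \<alpha>)
      + (\<Sum>\<beta>\<in>{\<beta>\<in>A. total_degree \<alpha> < total_degree \<beta>}. c \<beta> * mixed_difference \<alpha> (monomial \<beta>))"
    using \<alpha>(2) A by (intro mixed_difference_monomial_sum) (auto simp: Z_def)
  also have "(\<Sum>\<beta>\<in>{\<beta>\<in>A. total_degree \<alpha> < total_degree \<beta>}. c \<beta> * mixed_difference \<alpha> (monomial \<beta>)) = 0"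
    using max by (intro sum.neutral) (force simp: Z_def)
  finally show False
    using \<alpha>(2) mixed_difference_monomial_self[of \<alpha>] by (simp add: Z_def)
qed

lemma monomial_coeffs_unique:
  assumes "finite A" "\<And>l. (\<Sum>\<beta>\<in>A. c \<beta> * monomial \<beta> l) = (\<Sum>\<beta>\<in>A. d \<beta> * monomial \<beta> l)" "\<beta> \<in> A"
  shows "c \<beta> = d \<beta>"
  using monomial_coeffs_eq_0[of A "\<lambda>\<beta>. c \<beta> - d \<beta>"] assms
  by (simp add: left_diff_distrib sum_subtractf)

definition poly_coeff :: "nat \<Rightarrow> (real^'n::finite \<Rightarrow> real) \<Rightarrow> ('n \<Rightarrow> nat) \<Rightarrow> real" where
  "poly_coeff k p = (SOME c. \<forall>l. p l = (\<Sum>\<alpha>\<in>exponents_le k. c \<alpha> * monomial \<alpha> l))"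

lemma poly_coeff_expansion:
  assumes "poly_deg_le k p"
  shows "p l = (\<Sum>\<alpha>\<in>exponents_le k. poly_coeff k p \<alpha> * monomial \<alpha> l)"
proof -
  have "\<exists>c. \<forall>l. p l = (\<Sum>\<alpha>\<in>exponents_le k. c \<alpha> * monomial \<alpha> l)"
    using assms by (simp add: poly_deg_le_def)
  then show ?thesis
    unfolding poly_coeff_def by (rule someI_ex[THEN spec])
qed

lemma poly_coeff_eqI:
  assumes rep: "\<And>l. p l = (\<Sum>\<alpha>\<in>exponents_le k. c \<alpha> * monomial \<alpha> l)" and "\<alpha> \<in> exponents_le k"
  shows "poly_coeff k p \<alpha> = c \<alpha>"
proof (rule monomial_coeffs_unique[OF finite_exponents_le _ assms(2)])
  have deg: "poly_deg_le k p"
    using rep by (auto simp: poly_deg_le_def)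
  fix l
  have "(\<Sum>\<alpha>\<in>exponents_le k. poly_coeff k p \<alpha> * monomial \<alpha> l) = p l"
    by (rule poly_coeff_expansion[OF deg, symmetric])
  also have "\<dots> = (\<Sum>\<alpha>\<in>exponents_le k. c \<alpha> * monomial \<alpha> l)"
    by (rule rep)
  finally show "(\<Sum>\<alpha>\<in>exponents_le k. poly_coeff k p \<alpha> * monomial \<alpha> l)
      = (\<Sum>\<alpha>\<in>exponents_le k. c \<alpha> * monomial \<alpha> l)" .
qed

lemma poly_coeff_eq_0:
  assumes "poly_deg_le j p" "\<alpha> \<in> exponents_le k" "j < total_degree \<alpha>"
  shows "poly_coeff k p \<alpha> = 0"
proof -
  obtain c where c: "\<forall>l. p l = (\<Sum>\<alpha>\<in>exponents_le j. c \<alpha> * monomial \<alpha> l)"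
    using assms(1) by (auto simp: poly_deg_le_def)
  have "j \<le> k"
    using assms(2,3) by (simp add: exponents_le_def)
  then have "poly_coeff k p \<alpha> = (if \<alpha> \<in> exponents_le j then c \<alpha> else 0)"
    using c by (intro poly_coeff_eqI[OF _ assms(2)]) (simp add: sum_exponents_le_extend)
  then show ?thesis
    using assms(3) by (simp add: exponents_le_def)
qed

lemma monomial_coeff_eq_0_above_degree:
  assumes "poly_deg_le j p" "\<And>l. p l = (\<Sum>\<beta>\<in>exponents_le d. c \<beta> * monomial \<beta> l)"
    and "\<alpha> \<in> exponents_le d" "j < total_degree \<alpha>"
  shows "c \<alpha> = 0"
proof -
  have "poly_coeff d p \<alpha> = c \<alpha>"
    using assms(2,3) by (rule poly_coeff_eqI)
  moreover have "poly_coeff d p \<alpha> = 0"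
    using assms(1,3,4) by (rule poly_coeff_eq_0)
  ultimately show ?thesis
    by simp
qed

lemma sum_poly_coeff_monomial:
  assumes "finite A" "\<And>a. a \<in> A \<Longrightarrow> poly_deg_le k (p a)"
  shows "(\<Sum>\<alpha>\<in>exponents_le k. (\<Sum>a\<in>A. w a * poly_coeff k (p a) \<alpha>) * monomial \<alpha> l)
       = (\<Sum>a\<in>A. w a * p a l)"
proof -
  have "(\<Sum>\<alpha>\<in>exponents_le k. (\<Sum>a\<in>A. w a * poly_coeff k (p a) \<alpha>) * monomial \<alpha> l)
      = (\<Sum>a\<in>A. \<Sum>\<alpha>\<in>exponents_le k. w a * (poly_coeff k (p a) \<alpha> * monomial \<alpha> l))"
    by (subst sum.swap) (simp add: sum_distrib_right mult.assoc)
  also have "\<dots> = (\<Sum>a\<in>A. w a * p a l)"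
  proof (rule sum.cong[OF refl])
    fix a
    assume "a \<in> A"
    then show "(\<Sum>\<alpha>\<in>exponents_le k. w a * (poly_coeff k (p a) \<alpha> * monomial \<alpha> l)) = w a * p a l"
      using poly_coeff_expansion[OF assms(2), of a l] by (simp add: sum_distrib_left)
  qed
  finally show ?thesis .
qed

lemma poly_coeff_sum:
  assumes "finite A" "\<And>a. a \<in> A \<Longrightarrow> poly_deg_le k (p a)" "\<alpha> \<in> exponents_le k"
  shows "poly_coeff k (\<lambda>l. \<Sum>a\<in>A. w a * p a l) \<alpha> = (\<Sum>a\<in>A. w a * poly_coeff k (p a) \<alpha>)"
  using sum_poly_coeff_monomial[OF assms(1,2)]
  by (intro poly_coeff_eqI[where c="\<lambda>\<alpha>. \<Sum>a\<in>A. w a * poly_coeff k (p a) \<alpha>", OF _ assms(3)]) simp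

lemma poly_coeff_add:
  assumes "poly_deg_le k p" "poly_deg_le k q" "\<alpha> \<in> exponents_le k"
  shows "poly_coeff k (\<lambda>l. p l + q l) \<alpha> = poly_coeff k p \<alpha> + poly_coeff k q \<alpha>"
  using poly_coeff_expansion[OF assms(1)] poly_coeff_expansion[OF assms(2)]
  by (intro poly_coeff_eqI[where c="\<lambda>\<alpha>. poly_coeff k p \<alpha> + poly_coeff k q \<alpha>", OF _ assms(3)])
     (simp add: distrib_right sum.distrib)

lemma poly_coeff_cmult:
  assumes "poly_deg_le k p" "\<alpha> \<in> exponents_le k"
  shows "poly_coeff k (\<lambda>l. a * p l) \<alpha> = a * poly_coeff k p \<alpha>"
  using poly_coeff_expansion[OF assms(1)]
  by (intro poly_coeff_eqI[where c="\<lambda>\<alpha>. a * poly_coeff k p \<alpha>", OF _ assms(2)])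
     (simp add: sum_distrib_left mult.assoc)

lemma poly_coeff_zero: "\<alpha> \<in> exponents_le k \<Longrightarrow> poly_coeff k (\<lambda>l. 0) \<alpha> = 0"
  using poly_coeff_eqI[where p="\<lambda>l. 0" and c="\<lambda>\<alpha>. 0"] by simp

lemma poly_coeff_monomial_sum:
  assumes "d \<le> k" "\<alpha> \<in> exponents_le d"
  shows "poly_coeff k (\<lambda>l. \<Sum>\<beta>\<in>exponents_le d. c \<beta> * monomial \<beta> l) \<alpha> = c \<alpha>"
proof -
  have "\<alpha> \<in> exponents_le k"
    using assms by (simp add: exponents_le_def)
  then have "poly_coeff k (\<lambda>l. \<Sum>\<beta>\<in>exponents_le d. c \<beta> * monomial \<beta> l) \<alpha>
      = (if \<alpha> \<in> exponents_le d then c \<alpha> else 0)"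
    by (intro poly_coeff_eqI) (simp add: sum_exponents_le_extend[OF assms(1)])
  then show ?thesis
    using assms(2) by simp
qed

lemma monomial_coeffs_differentiable:
  fixes J :: "real^'n \<Rightarrow> real \<Rightarrow> real"
  assumes rep: "\<And>l s. s \<in> T \<Longrightarrow> J l s = (\<Sum>\<beta>\<in>exponents_le d. c \<beta> s * monomial \<beta> l)"
    and diff: "\<And>l. (\<lambda>s. J l s) differentiable (at t within T)"
    and "\<alpha> \<in> exponents_le d" "t \<in> T"
  shows "c \<alpha> differentiable (at t within T)"
  using assms(3)
proof (induction "d - total_degree \<alpha>" arbitrary: \<alpha> rule: less_induct)
  case less
  define e where "e \<beta> = mixed_difference \<alpha> (monomial \<beta>)" for \<beta>
  define H :: "('n \<Rightarrow> nat) set" where "H = {\<beta>\<in>exponents_le d. total_degree \<alpha> < total_degree \<beta>}"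
  have c_eq: "c \<alpha> s = (mixed_difference \<alpha> (\<lambda>l. J l s) - (\<Sum>\<beta>\<in>H. c \<beta> s * e \<beta>)) / e \<alpha>"
    if "s \<in> T" for s
  proof -
    have "mixed_difference \<alpha> (\<lambda>l. J l s) = c \<alpha> s * e \<alpha> + (\<Sum>\<beta>\<in>H. c \<beta> s * e \<beta>)"
      using mixed_difference_monomial_sum[OF finite_exponents_le less.prems, of "\<lambda>\<beta>. c \<beta> s"]
      by (simp add: rep[OF that] e_def H_def)
    then show ?thesis
      using mixed_difference_monomial_self[of \<alpha>] by (simp add: e_def eq_divide_eq)
  qed
  have "(\<lambda>s. (mixed_difference \<alpha> (\<lambda>l. J l s) - (\<Sum>\<beta>\<in>H. c \<beta> s * e \<beta>)) / e \<alpha>)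
      differentiable (at t within T)"
  proof -
    have "c \<beta> differentiable (at t within T)" if "\<beta> \<in> H" for \<beta>
      using that by (intro less.hyps) (auto simp: H_def exponents_le_def)
    then have "(\<lambda>s. \<Sum>\<beta>\<in>H. c \<beta> s * e \<beta>) differentiable (at t within T)"
      by (simp add: H_def)
    moreover have "(\<lambda>s. mixed_difference \<alpha> (\<lambda>l. J l s)) differentiable (at t within T)"
      unfolding mixed_difference_def
      using diff by (simp add: finite_PiE)
    ultimately show ?thesis
      using mixed_difference_monomial_self[of \<alpha>]
      by (simp add: e_def)
  qed
  then show ?case
  proof (rule differentiable_transform_within[OF _ zero_less_one \<open>t \<in> T\<close>])
    fix s
    assume "s \<in> T"
    then show "(mixed_difference \<alpha> (\<lambda>l. J l s) - (\<Sum>\<beta>\<in>H. c \<beta> s * e \<beta>)) / e \<alpha> = c \<alpha> s"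
      by (rule c_eq[symmetric])
  qed
qed

section \<open>Derivatives on intervals and a Gronwall argument\<close>

lemma has_real_derivative_unique_Icc:
  assumes "a < b" "t \<in> {a..b}"
    and "(f has_real_derivative D1) (at t within {a..b})" "(f has_real_derivative D2) (at t within {a..b})"
  shows "D1 = D2"
  using assms vector_derivative_unique_within_closed_interval[of a b t f D1 D2]
  unfolding has_real_derivative_iff_has_vector_derivative interval_cbox by simp

lemma finite_family_bounded_on_compact:
  fixes f :: "'a \<Rightarrow> 'b::metric_space \<Rightarrow> real"
  assumes "finite A" "compact S" "\<And>\<beta>. \<beta> \<in> A \<Longrightarrow> continuous_on S (f \<beta>)"
  shows "\<exists>C\<ge>0. \<forall>\<beta>\<in>A. \<forall>t\<in>S. \<bar>f \<beta> t\<bar> \<le> C"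
proof -
  have "\<forall>\<beta>\<in>A. \<exists>B. \<forall>t\<in>S. \<bar>f \<beta> t\<bar> \<le> B"
    using continuous_on_compact_bound[OF assms(2,3)] by (metis real_norm_def)
  then obtain B where B: "\<And>\<beta> t. \<beta> \<in> A \<Longrightarrow> t \<in> S \<Longrightarrow> \<bar>f \<beta> t\<bar> \<le> B \<beta>"
    by (metis bchoice)
  have "\<bar>f \<beta> t\<bar> \<le> (\<Sum>\<beta>\<in>A. \<bar>B \<beta>\<bar>)" if "\<beta> \<in> A" "t \<in> S" for \<beta> t
  proof -
    have "\<bar>f \<beta> t\<bar> \<le> \<bar>B \<beta>\<bar>"
      using B[OF that] by linarith
    also have "\<dots> \<le> (\<Sum>\<beta>\<in>A. \<bar>B \<beta>\<bar>)"
      using that \<open>finite A\<close> by (intro member_le_sum) auto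
    finally show ?thesis .
  qed
  then show ?thesis
    by (intro exI[of _ "\<Sum>\<beta>\<in>A. \<bar>B \<beta>\<bar>"]) (simp add: sum_nonneg)
qed

lemma nonneg_vanishes_backward:
  fixes y y' :: "real \<Rightarrow> real"
  assumes deriv: "\<And>t. t \<in> {a..b} \<Longrightarrow> (y has_real_derivative y' t) (at t within {a..b})"
    and nonneg: "\<And>t. t \<in> {a..b} \<Longrightarrow> y t \<ge> 0"
    and growth: "\<And>t. t \<in> {a..b} \<Longrightarrow> y' t \<ge> - K * y t"
    and final: "y b = 0"
    and "t \<in> {a..b}"
  shows "y t = 0"
proof -
  define z where "z s = y s * exp (K * s)" for s
  have dz: "(z has_real_derivative (y' s + K * y s) * exp (K * s)) (at s within {a..b})"
    if "s \<in> {a..b}" for s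
    unfolding z_def using deriv[OF that] by (auto intro!: derivative_eq_intros simp: algebra_simps)
  have "z t \<le> z b"
  proof (rule DERIV_nonneg_imp_increasing_open[of t b z])
    show "t \<le> b"
      using \<open>t \<in> {a..b}\<close> by simp
    have "continuous_on {a..b} z"
      unfolding continuous_on_eq_continuous_within using dz DERIV_continuous by blast
    then show "continuous_on {t..b} z"
      by (rule continuous_on_subset) (use \<open>t \<in> {a..b}\<close> in auto)
  next
    fix s
    assume s: "t < s" "s < b"
    then have "s \<in> {a..b}" "at s within {a..b} = at s"
      using \<open>t \<in> {a..b}\<close> by (auto intro: at_within_Icc_at)
    moreover have "0 \<le> (y' s + K * y s) * exp (K * s)"
      using growth[OF \<open>s \<in> {a..b}\<close>] by simp
    ultimately show "\<exists>D. (z has_real_derivative D) (at s) \<and> 0 \<le> D"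
      using dz[OF \<open>s \<in> {a..b}\<close>] by metis
  qed
  then have "y t \<le> 0"
    using final by (simp add: z_def mult_le_0_iff)
  then show ?thesis
    using nonneg[OF \<open>t \<in> {a..b}\<close>] by simp
qed

lemma ode_system_vanishes_backward:
  fixes x x' :: "'a \<Rightarrow> real \<Rightarrow> real"
  assumes "finite A"
    and deriv: "\<And>\<alpha> t. \<alpha> \<in> A \<Longrightarrow> t \<in> {a..b} \<Longrightarrow> (x \<alpha> has_real_derivative x' \<alpha> t) (at t within {a..b})"
    and bound: "\<And>\<alpha> t. \<alpha> \<in> A \<Longrightarrow> t \<in> {a..b} \<Longrightarrow> \<bar>x' \<alpha> t\<bar> \<le> K * (\<Sum>\<beta>\<in>A. \<bar>x \<beta> t\<bar>)"
    and final: "\<And>\<alpha>. \<alpha> \<in> A \<Longrightarrow> x \<alpha> b = 0"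
    and "\<alpha> \<in> A" "t \<in> {a..b}"
  shows "x \<alpha> t = 0"
proof -
  define y where "y t = (\<Sum>\<beta>\<in>A. (x \<beta> t)\<^sup>2)" for t
  define y' where "y' t = (\<Sum>\<beta>\<in>A. 2 * x \<beta> t * x' \<beta> t)" for t
  have deriv_y: "(y has_real_derivative y' t) (at t within {a..b})" if "t \<in> {a..b}" for t
    unfolding y_def y'_def
  proof (rule DERIV_sum)
    fix \<beta>
    assume "\<beta> \<in> A"
    from DERIV_power[OF deriv[OF this that], of 2]
    show "((\<lambda>s. (x \<beta> s)\<^sup>2) has_real_derivative 2 * x \<beta> t * x' \<beta> t) (at t within {a..b})"
      by (simp add: mult_ac)
  qed
  have growth: "y' t \<ge> - (2 * \<bar>K\<bar> * card A) * y t" if "t \<in> {a..b}" for t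
  proof -
    define S where "S = (\<Sum>\<beta>\<in>A. \<bar>x \<beta> t\<bar>)"
    have "\<bar>x' \<beta> t\<bar> \<le> \<bar>K\<bar> * S" if "\<beta> \<in> A" for \<beta>
      using bound[OF that \<open>t \<in> {a..b}\<close>] abs_ge_self[of K] sum_nonneg[of A "\<lambda>\<beta>. \<bar>x \<beta> t\<bar>"]
      unfolding S_def by (smt (verit) mult_right_mono)
    then have "\<bar>y' t\<bar> \<le> (\<Sum>\<beta>\<in>A. 2 * \<bar>x \<beta> t\<bar> * (\<bar>K\<bar> * S))"
      unfolding y'_def by (intro order.trans[OF sum_abs] sum_mono) (simp add: abs_mult mult_left_mono)
    also have "\<dots> = 2 * \<bar>K\<bar> * S * (\<Sum>\<beta>\<in>A. \<bar>x \<beta> t\<bar>)"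
      by (simp add: sum_distrib_left mult_ac)
    also have "\<dots> = 2 * \<bar>K\<bar> * S\<^sup>2"
      by (simp add: S_def power2_eq_square)
    also have "\<dots> \<le> 2 * \<bar>K\<bar> * (card A * y t)"
      using sum_squared_le_sum_of_squares[of "\<lambda>\<beta>. \<bar>x \<beta> t\<bar>" A]
      by (intro mult_left_mono) (simp_all add: S_def y_def mult.commute)
    finally show ?thesis
      by (simp add: mult_ac)
  qed
  have "y b = 0"
    using final by (simp add: y_def)
  moreover have "y s \<ge> 0" for s
    unfolding y_def by (simp add: sum_nonneg)
  ultimately have "y t = 0"
    using nonneg_vanishes_backward[OF deriv_y _ growth] \<open>t \<in> {a..b}\<close> by simp
  then have "\<forall>\<beta>\<in>A. (x \<beta> t)\<^sup>2 = 0"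
    unfolding y_def using \<open>finite A\<close> by (subst (asm) sum_nonneg_eq_0_iff) auto
  then show ?thesis
    using \<open>\<alpha> \<in> A\<close> by simp
qed

lemma abs_linear_plus_quadratic_le:
  fixes x L :: "'a \<Rightarrow> real" and N :: "'a \<Rightarrow> 'a \<Rightarrow> real"
  assumes "finite A" "H \<subseteq> A"
    and bounded: "\<And>\<beta>. \<beta> \<in> A \<Longrightarrow> \<bar>x \<beta>\<bar> \<le> C"
    and L: "\<And>\<beta>. \<beta> \<in> A - H \<Longrightarrow> L \<beta> = 0"
    and N: "\<And>\<beta> \<gamma>. \<beta> \<in> A - H \<Longrightarrow> \<gamma> \<in> A - H \<Longrightarrow> N \<beta> \<gamma> = 0"
  shows "\<bar>(\<Sum>\<beta>\<in>A. x \<beta> * L \<beta>) + (\<Sum>\<beta>\<in>A. \<Sum>\<gamma>\<in>A. x \<beta> * x \<gamma> * N \<beta> \<gamma>)\<bar>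
    \<le> ((\<Sum>\<beta>\<in>A. \<bar>L \<beta>\<bar>) + C * (\<Sum>\<beta>\<in>A. \<Sum>\<gamma>\<in>A. \<bar>N \<beta> \<gamma>\<bar>)) * (\<Sum>\<beta>\<in>H. \<bar>x \<beta>\<bar>)"
proof -
  define S where "S = (\<Sum>\<beta>\<in>H. \<bar>x \<beta>\<bar>)"
  have "finite H"
    using assms(1,2) by (rule finite_subset[rotated])
  then have S: "\<bar>x \<beta>\<bar> \<le> S" if "\<beta> \<in> H" for \<beta>
    unfolding S_def using that by (intro member_le_sum) auto
  have lin: "\<bar>x \<beta> * L \<beta>\<bar> \<le> \<bar>L \<beta>\<bar> * S" if "\<beta> \<in> A" for \<beta>
  proof (cases "\<beta> \<in> H")
    case True
    then have "\<bar>x \<beta>\<bar> * \<bar>L \<beta>\<bar> \<le> S * \<bar>L \<beta>\<bar>"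
      using S by (intro mult_right_mono) auto
    then show ?thesis
      by (simp add: abs_mult mult.commute)
  next
    case False
    then show ?thesis
      using L that by simp
  qed
  have quad: "\<bar>x \<beta> * x \<gamma> * N \<beta> \<gamma>\<bar> \<le> C * \<bar>N \<beta> \<gamma>\<bar> * S" if "\<beta> \<in> A" "\<gamma> \<in> A" for \<beta> \<gamma>
  proof (cases "\<beta> \<in> H \<or> \<gamma> \<in> H")
    case True
    then have "\<bar>x \<beta>\<bar> * \<bar>x \<gamma>\<bar> \<le> C * S"
      using S bounded that by (smt (verit) abs_ge_zero mult.commute mult_mono)
    then have "\<bar>x \<beta>\<bar> * \<bar>x \<gamma>\<bar> * \<bar>N \<beta> \<gamma>\<bar> \<le> C * S * \<bar>N \<beta> \<gamma>\<bar>"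
      by (rule mult_right_mono) simp
    then show ?thesis
      by (simp add: abs_mult mult_ac)
  next
    case False
    then show ?thesis
      using N that by simp
  qed
  have "\<bar>(\<Sum>\<beta>\<in>A. x \<beta> * L \<beta>) + (\<Sum>\<beta>\<in>A. \<Sum>\<gamma>\<in>A. x \<beta> * x \<gamma> * N \<beta> \<gamma>)\<bar>
      \<le> (\<Sum>\<beta>\<in>A. \<bar>x \<beta> * L \<beta>\<bar>) + (\<Sum>\<beta>\<in>A. \<Sum>\<gamma>\<in>A. \<bar>x \<beta> * x \<gamma> * N \<beta> \<gamma>\<bar>)"
    by (intro order.trans[OF abs_triangle_ineq] add_mono order.trans[OF sum_abs] sum_mono sum_abs)
  also have "\<dots> \<le> (\<Sum>\<beta>\<in>A. \<bar>L \<beta>\<bar> * S) + (\<Sum>\<beta>\<in>A. \<Sum>\<gamma>\<in>A. C * \<bar>N \<beta> \<gamma>\<bar> * S)"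
    using lin quad by (intro add_mono sum_mono) auto
  also have "\<dots> = ((\<Sum>\<beta>\<in>A. \<bar>L \<beta>\<bar>) + C * (\<Sum>\<beta>\<in>A. \<Sum>\<gamma>\<in>A. \<bar>N \<beta> \<gamma>\<bar>)) * S"
    by (simp only: distrib_right sum_distrib_right sum_distrib_left mult.assoc)
  finally show ?thesis
    unfolding S_def .
qed

section \<open>Polynomial solutions of the HJB equation are quadratic\<close>

text \<open>\<open>Si\<close> stands for \<open>S\<^sup>-\<^sup>1\<close>.\<close>
definition hjb_solution ::
    "real \<Rightarrow> real^'n \<Rightarrow> real^'n^'n \<Rightarrow> real^'n^'n \<Rightarrow> real^'n^'n \<Rightarrow>
     (real^'n \<Rightarrow> real \<Rightarrow> real) \<Rightarrow> real set \<Rightarrow> bool" where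
  "hjb_solution \<omega> lam0 B Q Si J T \<longleftrightarrow> (\<forall>l. \<forall>t\<in>T. \<exists>Jt grad.
      ((\<lambda>s. J l s) has_real_derivative Jt) (at t within T) \<and>
      ((\<lambda>x. J x t) has_derivative (\<lambda>h. grad \<bullet> h)) (at l) \<and>
      0 = Jt + (\<omega> *\<^sub>R lam0 - \<omega> *\<^sub>R l) \<bullet> grad + l \<bullet> DeltaB B J l t
          - (1/2) * (l \<bullet> (Q *v l))
          - (1/2) * (DeltaB B J l t \<bullet> (Si *v DeltaB B J l t)))"

lemma hjb_solutionE:
  assumes "hjb_solution \<omega> lam0 B Q Si J T" "t \<in> T"
  obtains Jt grad where "((\<lambda>s. J l s) has_real_derivative Jt) (at t within T)"
    "((\<lambda>x. J x t) has_derivative (\<lambda>h. grad \<bullet> h)) (at l)"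
    "0 = Jt + (\<omega> *\<^sub>R lam0 - \<omega> *\<^sub>R l) \<bullet> grad + l \<bullet> DeltaB B J l t
       - (1/2) * (l \<bullet> (Q *v l)) - (1/2) * (DeltaB B J l t \<bullet> (Si *v DeltaB B J l t))"
  using assms unfolding hjb_solution_def by blast

definition monomial_jump :: "real^'n^'n \<Rightarrow> ('n::finite \<Rightarrow> nat) \<Rightarrow> real^'n \<Rightarrow> real^'n" where
  "monomial_jump B \<beta> l = (\<chi> i. monomial \<beta> (l + col B i) - monomial \<beta> l)"

definition hjb_linear_term ::
    "real \<Rightarrow> real^'n \<Rightarrow> real^'n^'n \<Rightarrow> ('n::finite \<Rightarrow> nat) \<Rightarrow> real^'n \<Rightarrow> real" where
  "hjb_linear_term \<omega> lam0 B \<beta> l =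
     monomial_deriv \<beta> l (\<omega> *\<^sub>R lam0 - \<omega> *\<^sub>R l) + l \<bullet> monomial_jump B \<beta> l"

definition hjb_quadratic_term ::
    "real^'n^'n \<Rightarrow> real^'n^'n \<Rightarrow> ('n::finite \<Rightarrow> nat) \<Rightarrow> ('n \<Rightarrow> nat) \<Rightarrow> real^'n \<Rightarrow> real" where
  "hjb_quadratic_term Si B \<beta> \<gamma> l = monomial_jump B \<beta> l \<bullet> (Si *v monomial_jump B \<gamma> l)"

lemma poly_deg_le_monomial_jump: "poly_deg_le (total_degree \<beta> - 1) (\<lambda>l. monomial_jump B \<beta> l $ i)"
  unfolding monomial_jump_def using poly_deg_le_monomial_shift_diff by simp

lemma poly_deg_le_hjb_linear_term:
  "poly_deg_le (max 1 (total_degree \<beta>)) (hjb_linear_term \<omega> lam0 B \<beta>)"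
proof -
  have "poly_deg_le 1 (\<lambda>l. \<omega> * lam0 $ i - \<omega> * l $ i)" for i
    by (intro poly_deg_le_diff poly_deg_le_const poly_deg_le_cmult poly_deg_le_component)
  then have "poly_deg_le 1 (\<lambda>l. (\<omega> *\<^sub>R lam0 - \<omega> *\<^sub>R l) $ i)" for i
    by simp
  then have "poly_deg_le (total_degree \<beta>) (\<lambda>l. monomial_deriv \<beta> l (\<omega> *\<^sub>R lam0 - \<omega> *\<^sub>R l))"
    by (rule poly_deg_le_monomial_deriv)
  moreover have "poly_deg_le (1 + (total_degree \<beta> - 1)) (\<lambda>l. l \<bullet> monomial_jump B \<beta> l)"
    by (intro poly_deg_le_inner poly_deg_le_component poly_deg_le_monomial_jump)
  ultimately show ?thesis
    unfolding hjb_linear_term_def by (intro poly_deg_le_add) (auto elim: poly_deg_le_mono)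
qed

lemma poly_deg_le_hjb_quadratic_term:
  "poly_deg_le (total_degree \<beta> - 1 + (total_degree \<gamma> - 1)) (hjb_quadratic_term Si B \<beta> \<gamma>)"
  unfolding hjb_quadratic_term_def
  by (intro poly_deg_le_inner poly_deg_le_matrix_vector_mult poly_deg_le_monomial_jump)

lemma hjb_polynomial_expansion:
  fixes J :: "real^'n \<Rightarrow> real \<Rightarrow> real"
  assumes rep: "\<And>l. J l t = (\<Sum>\<beta>\<in>exponents_le d. c \<beta> * monomial \<beta> l)"
    and grad: "((\<lambda>x. J x t) has_derivative (\<lambda>h. grad \<bullet> h)) (at l)"
  shows "(\<omega> *\<^sub>R lam0 - \<omega> *\<^sub>R l) \<bullet> grad + l \<bullet> DeltaB B J l t
           - 1/2 * (DeltaB B J l t \<bullet> (Si *v DeltaB B J l t))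
       = (\<Sum>\<beta>\<in>exponents_le d. c \<beta> * hjb_linear_term \<omega> lam0 B \<beta> l)
         - 1/2 * (\<Sum>\<beta>\<in>exponents_le d. \<Sum>\<gamma>\<in>exponents_le d.
                    c \<beta> * c \<gamma> * hjb_quadratic_term Si B \<beta> \<gamma> l)"
proof -
  have "((\<lambda>x. \<Sum>\<beta>\<in>exponents_le d. c \<beta> * monomial \<beta> x) has_derivative
      (\<lambda>h. \<Sum>\<beta>\<in>exponents_le d. c \<beta> * monomial_deriv \<beta> l h)) (at l)"
    by (intro has_derivative_sum has_derivative_mult_right has_derivative_monomial)
  then have "((\<lambda>x. J x t) has_derivative
      (\<lambda>h. \<Sum>\<beta>\<in>exponents_le d. c \<beta> * monomial_deriv \<beta> l h)) (at l)"
    by (simp add: rep)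
  with grad have "(\<lambda>h. grad \<bullet> h) = (\<lambda>h. \<Sum>\<beta>\<in>exponents_le d. c \<beta> * monomial_deriv \<beta> l h)"
    by (rule has_derivative_unique)
  then have drift: "(\<omega> *\<^sub>R lam0 - \<omega> *\<^sub>R l) \<bullet> grad
      = (\<Sum>\<beta>\<in>exponents_le d. c \<beta> * monomial_deriv \<beta> l (\<omega> *\<^sub>R lam0 - \<omega> *\<^sub>R l))"
    by (metis inner_commute)
  have jump: "DeltaB B J l t = (\<Sum>\<beta>\<in>exponents_le d. c \<beta> *\<^sub>R monomial_jump B \<beta> l)"
    by (simp add: DeltaB_def monomial_jump_def rep vec_eq_iff sum_component
        sum_subtractf[symmetric] right_diff_distrib)
  have "Si *v DeltaB B J l t = (\<Sum>\<gamma>\<in>exponents_le d. c \<gamma> *\<^sub>R (Si *v monomial_jump B \<gamma> l))"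
    unfolding jump by (simp add: linear_sum[OF matrix_vector_mul_linear] linear_scale[OF matrix_vector_mul_linear])
  then have "DeltaB B J l t \<bullet> (Si *v DeltaB B J l t) = (\<Sum>\<beta>\<in>exponents_le d. c \<beta> *\<^sub>R monomial_jump B \<beta> l)
      \<bullet> (\<Sum>\<gamma>\<in>exponents_le d. c \<gamma> *\<^sub>R (Si *v monomial_jump B \<gamma> l))"
    by (simp only: jump)
  also have "\<dots>
      = (\<Sum>\<beta>\<in>exponents_le d. \<Sum>\<gamma>\<in>exponents_le d. c \<beta> * c \<gamma> * hjb_quadratic_term Si B \<beta> \<gamma> l)"
    by (simp only: inner_sum_left) (simp add: inner_sum_right hjb_quadratic_term_def sum_distrib_left mult_ac)
  finally have "DeltaB B J l t \<bullet> (Si *v DeltaB B J l t)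
      = (\<Sum>\<beta>\<in>exponents_le d. \<Sum>\<gamma>\<in>exponents_le d. c \<beta> * c \<gamma> * hjb_quadratic_term Si B \<beta> \<gamma> l)" .
  moreover have "l \<bullet> DeltaB B J l t = (\<Sum>\<beta>\<in>exponents_le d. c \<beta> * (l \<bullet> monomial_jump B \<beta> l))"
    by (simp add: jump inner_sum_right)
  ultimately show ?thesis
    by (simp add: drift hjb_linear_term_def distrib_left sum.distrib)
qed

text \<open>\<open>D = 2 d + 2\<close> bounds the degrees of all terms of the HJB identity for a polynomial of
  degree \<open>d\<close>.\<close>
lemma hjb_identity_high_coeff_eq:
  fixes c c' :: "('n::finite \<Rightarrow> nat) \<Rightarrow> real" and d :: nat
  defines "D \<equiv> 2 * d + 2"
  assumes identity: "\<And>l. 0 = (\<Sum>\<beta>\<in>exponents_le d. c' \<beta> * monomial \<beta> l)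
       + (\<Sum>\<beta>\<in>exponents_le d. c \<beta> * hjb_linear_term \<omega> lam0 B \<beta> l) - 1/2 * (l \<bullet> (Q *v l))
       - 1/2 * (\<Sum>\<beta>\<in>exponents_le d. \<Sum>\<gamma>\<in>exponents_le d. c \<beta> * c \<gamma> * hjb_quadratic_term Si B \<beta> \<gamma> l)"
    and \<alpha>: "\<alpha> \<in> exponents_le d" "3 \<le> total_degree \<alpha>"
  shows "c' \<alpha> = (\<Sum>\<beta>\<in>exponents_le d. c \<beta> * - poly_coeff D (hjb_linear_term \<omega> lam0 B \<beta>) \<alpha>)
      + (\<Sum>\<beta>\<in>exponents_le d. \<Sum>\<gamma>\<in>exponents_le d.
           c \<beta> * c \<gamma> * (poly_coeff D (hjb_quadratic_term Si B \<beta> \<gamma>) \<alpha> / 2))"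
proof -
  define P1 where "P1 l = (\<Sum>\<beta>\<in>exponents_le d. c' \<beta> * monomial \<beta> l)" for l
  define P2 where "P2 l = (\<Sum>\<beta>\<in>exponents_le d. c \<beta> * hjb_linear_term \<omega> lam0 B \<beta> l)" for l
  define P4 where "P4 l = (\<Sum>\<beta>\<in>exponents_le d. c \<beta> *
      (\<Sum>\<gamma>\<in>exponents_le d. c \<gamma> * hjb_quadratic_term Si B \<beta> \<gamma> l))" for l
  have \<alpha>D: "\<alpha> \<in> exponents_le D"
    using \<alpha>(1) by (simp add: exponents_le_def D_def)
  have lin: "poly_deg_le D (hjb_linear_term \<omega> lam0 B \<beta>)" if "\<beta> \<in> exponents_le d" for \<beta>
    using that by (intro poly_deg_le_mono[OF poly_deg_le_hjb_linear_term]) (simp add: exponents_le_def D_def)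
  have quad: "poly_deg_le D (hjb_quadratic_term Si B \<beta> \<gamma>)"
    if "\<beta> \<in> exponents_le d" "\<gamma> \<in> exponents_le d" for \<beta> \<gamma>
    using that by (intro poly_deg_le_mono[OF poly_deg_le_hjb_quadratic_term]) (simp add: exponents_le_def D_def)
  have inner: "poly_deg_le D (\<lambda>l. \<Sum>\<gamma>\<in>exponents_le d. c \<gamma> * hjb_quadratic_term Si B \<beta> \<gamma> l)"
    if "\<beta> \<in> exponents_le d" for \<beta>
    using that by (intro poly_deg_le_sum poly_deg_le_cmult quad) auto
  have P1: "poly_deg_le D P1"
    unfolding P1_def
    by (intro poly_deg_le_sum poly_deg_le_cmult poly_deg_le_monomial finite_exponents_le)
       (auto simp: exponents_le_def D_def)
  have P2: "poly_deg_le D P2"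
    unfolding P2_def by (intro poly_deg_le_sum poly_deg_le_cmult lin) auto
  have P3: "poly_deg_le D (\<lambda>l. l \<bullet> (Q *v l))"
    by (rule poly_deg_le_mono[OF poly_deg_le_quadratic_form]) (simp add: D_def)
  have P4: "poly_deg_le D P4"
    unfolding P4_def by (intro poly_deg_le_sum poly_deg_le_cmult inner) auto
  have "P1 l + (P2 l + (- 1/2 * (l \<bullet> (Q *v l)) + - 1/2 * P4 l)) = 0" for l
    unfolding P1_def P2_def P4_def using identity[of l] by (simp add: sum_distrib_left sum_negf mult_ac; linarith)
  then have "(\<lambda>l. P1 l + (P2 l + (- 1/2 * (l \<bullet> (Q *v l)) + - 1/2 * P4 l))) = (\<lambda>l. 0)"
    by (intro ext)
  then have "0 = poly_coeff D (\<lambda>l. P1 l + (P2 l + (- 1/2 * (l \<bullet> (Q *v l)) + - 1/2 * P4 l))) \<alpha>"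
    using \<alpha>D by (simp add: poly_coeff_zero)
  also have "\<dots> = poly_coeff D P1 \<alpha>
      + poly_coeff D (\<lambda>l. P2 l + (- 1/2 * (l \<bullet> (Q *v l)) + - 1/2 * P4 l)) \<alpha>"
    using P1 P2 P3 P4 \<alpha>D by (intro poly_coeff_add poly_deg_le_add poly_deg_le_cmult)
  also have "poly_coeff D (\<lambda>l. P2 l + (- 1/2 * (l \<bullet> (Q *v l)) + - 1/2 * P4 l)) \<alpha>
      = poly_coeff D P2 \<alpha> + poly_coeff D (\<lambda>l. - 1/2 * (l \<bullet> (Q *v l)) + - 1/2 * P4 l) \<alpha>"
    using P2 P3 P4 \<alpha>D by (intro poly_coeff_add poly_deg_le_add poly_deg_le_cmult)
  also have "poly_coeff D (\<lambda>l. - 1/2 * (l \<bullet> (Q *v l)) + - 1/2 * P4 l) \<alpha>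
      = - 1/2 * poly_coeff D (\<lambda>l. l \<bullet> (Q *v l)) \<alpha> + - 1/2 * poly_coeff D P4 \<alpha>"
    using P3 P4 \<alpha>D by (simp only: poly_coeff_add poly_coeff_cmult poly_deg_le_cmult)
  also have "poly_coeff D P1 \<alpha> = c' \<alpha>"
    unfolding P1_def using \<alpha>(1) by (intro poly_coeff_monomial_sum) (simp_all add: D_def)
  also have "poly_coeff D (\<lambda>l. l \<bullet> (Q *v l)) \<alpha> = 0"
    using \<alpha> \<alpha>D by (intro poly_coeff_eq_0[OF poly_deg_le_quadratic_form]) auto
  also have "poly_coeff D P2 \<alpha> = (\<Sum>\<beta>\<in>exponents_le d. c \<beta> * poly_coeff D (hjb_linear_term \<omega> lam0 B \<beta>) \<alpha>)"
    unfolding P2_def using lin \<alpha>D by (intro poly_coeff_sum) auto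
  also have "poly_coeff D P4 \<alpha> = (\<Sum>\<beta>\<in>exponents_le d. c \<beta> *
      (\<Sum>\<gamma>\<in>exponents_le d. c \<gamma> * poly_coeff D (hjb_quadratic_term Si B \<beta> \<gamma>) \<alpha>))"
    unfolding P4_def using inner quad \<alpha>D by (simp add: poly_coeff_sum)
  finally show ?thesis
    by (simp add: sum_distrib_left sum_negf field_simps)
qed

lemma hjb_polynomial_coeff_ode:
  fixes J :: "real^'n \<Rightarrow> real \<Rightarrow> real"
  assumes sol: "hjb_solution \<omega> lam0 B Q Si J {t0..tf}" and "t0 < tf" "t \<in> {t0..tf}"
    and rep: "\<And>l s. s \<in> {t0..tf} \<Longrightarrow> J l s = (\<Sum>\<beta>\<in>exponents_le d. c \<beta> s * monomial \<beta> l)"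
    and dc: "\<And>\<beta>. \<beta> \<in> exponents_le d \<Longrightarrow> (c \<beta> has_real_derivative c' \<beta>) (at t within {t0..tf})"
    and "\<alpha> \<in> exponents_le d" "3 \<le> total_degree \<alpha>"
  shows "c' \<alpha> = (\<Sum>\<beta>\<in>exponents_le d. c \<beta> t * - poly_coeff (2 * d + 2) (hjb_linear_term \<omega> lam0 B \<beta>) \<alpha>)
      + (\<Sum>\<beta>\<in>exponents_le d. \<Sum>\<gamma>\<in>exponents_le d.
           c \<beta> t * c \<gamma> t * (poly_coeff (2 * d + 2) (hjb_quadratic_term Si B \<beta> \<gamma>) \<alpha> / 2))"
proof (rule hjb_identity_high_coeff_eq[OF _ assms(6,7)])
  fix l
  obtain Jt grad where Jt: "((\<lambda>s. J l s) has_real_derivative Jt) (at t within {t0..tf})"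
    and grad: "((\<lambda>x. J x t) has_derivative (\<lambda>h. grad \<bullet> h)) (at l)"
    and eq: "0 = Jt + (\<omega> *\<^sub>R lam0 - \<omega> *\<^sub>R l) \<bullet> grad + l \<bullet> DeltaB B J l t
       - (1/2) * (l \<bullet> (Q *v l)) - (1/2) * (DeltaB B J l t \<bullet> (Si *v DeltaB B J l t))"
    using sol \<open>t \<in> {t0..tf}\<close> by (rule hjb_solutionE)
  have "((\<lambda>s. \<Sum>\<beta>\<in>exponents_le d. c \<beta> s * monomial \<beta> l) has_real_derivative
      (\<Sum>\<beta>\<in>exponents_le d. c' \<beta> * monomial \<beta> l)) (at t within {t0..tf})"
    by (intro DERIV_sum DERIV_cmult_right dc)
  then have "((\<lambda>s. J l s) has_real_derivative
      (\<Sum>\<beta>\<in>exponents_le d. c' \<beta> * monomial \<beta> l)) (at t within {t0..tf})"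
    using \<open>t \<in> {t0..tf}\<close> by (rule has_field_derivative_transform_within[OF _ zero_less_one]) (simp add: rep)
  with Jt have Jt_eq: "Jt = (\<Sum>\<beta>\<in>exponents_le d. c' \<beta> * monomial \<beta> l)"
    using \<open>t0 < tf\<close> \<open>t \<in> {t0..tf}\<close> by (intro has_real_derivative_unique_Icc)
  have "J x t = (\<Sum>\<beta>\<in>exponents_le d. c \<beta> t * monomial \<beta> x)" for x
    using rep \<open>t \<in> {t0..tf}\<close> by simp
  from hjb_polynomial_expansion[where J=J and t=t and d=d and c="\<lambda>\<beta>. c \<beta> t", OF this grad, of \<omega> lam0 B Si]
  show "0 = (\<Sum>\<beta>\<in>exponents_le d. c' \<beta> * monomial \<beta> l)
      + (\<Sum>\<beta>\<in>exponents_le d. c \<beta> t * hjb_linear_term \<omega> lam0 B \<beta> l) - 1/2 * (l \<bullet> (Q *v l))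
      - 1/2 * (\<Sum>\<beta>\<in>exponents_le d. \<Sum>\<gamma>\<in>exponents_le d.
                 c \<beta> t * c \<gamma> t * hjb_quadratic_term Si B \<beta> \<gamma> l)"
    using eq Jt_eq by linarith
qed

lemma hjb_polynomial_high_coeffs_vanish:
  fixes J :: "real^'n \<Rightarrow> real \<Rightarrow> real"
  assumes sol: "hjb_solution \<omega> lam0 B Q Si J {t0..tf}" and "t0 < tf"
    and rep: "\<And>l t. t \<in> {t0..tf} \<Longrightarrow> J l t = (\<Sum>\<beta>\<in>exponents_le d. c \<beta> t * monomial \<beta> l)"
    and terminal: "\<And>l. J l tf = - (1/2) * (l \<bullet> (F *v l))"
    and "\<alpha> \<in> exponents_le d" "3 \<le> total_degree \<alpha>" "t \<in> {t0..tf}"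
  shows "c \<alpha> t = 0"
proof -
  define H :: "('n \<Rightarrow> nat) set" where "H = {\<beta>\<in>exponents_le d. 3 \<le> total_degree \<beta>}"
  define L where "L \<alpha> \<beta> = - poly_coeff (2 * d + 2) (hjb_linear_term \<omega> lam0 B \<beta>) \<alpha>" for \<alpha> \<beta>
  define N where "N \<alpha> \<beta> \<gamma> = poly_coeff (2 * d + 2) (hjb_quadratic_term Si B \<beta> \<gamma>) \<alpha> / 2" for \<alpha> \<beta> \<gamma>
  have diff: "c \<beta> differentiable (at t within {t0..tf})"
    if \<beta>: "\<beta> \<in> exponents_le d" and t: "t \<in> {t0..tf}" for \<beta> t
  proof (rule monomial_coeffs_differentiable[OF rep _ \<beta> t])
    fix l
    obtain Jt where "((\<lambda>s. J l s) has_real_derivative Jt) (at t within {t0..tf})"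
      using sol t by (rule hjb_solutionE)
    then show "(\<lambda>s. J l s) differentiable (at t within {t0..tf})"
      unfolding real_differentiable_def by blast
  qed
  define c' where "c' \<beta> t = (SOME D. (c \<beta> has_real_derivative D) (at t within {t0..tf}))" for \<beta> t
  have c': "(c \<beta> has_real_derivative c' \<beta> t) (at t within {t0..tf})"
    if "\<beta> \<in> exponents_le d" "t \<in> {t0..tf}" for \<beta> t
    unfolding c'_def using diff[OF that] unfolding real_differentiable_def by (rule someI_ex)
  have "continuous_on {t0..tf} (c \<beta>)" if "\<beta> \<in> exponents_le d" for \<beta>
    unfolding continuous_on_eq_continuous_within using c'[OF that] DERIV_continuous by blast
  then obtain C where "C \<ge> 0" and C: "\<forall>\<beta>\<in>exponents_le d. \<forall>t\<in>{t0..tf}. \<bar>c \<beta> t\<bar> \<le> C"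
    using finite_family_bounded_on_compact[OF finite_exponents_le compact_Icc] by blast
  define K where
    "K = (\<Sum>\<alpha>\<in>H. (\<Sum>\<beta>\<in>exponents_le d. \<bar>L \<alpha> \<beta>\<bar>) + C * (\<Sum>\<beta>\<in>exponents_le d. \<Sum>\<gamma>\<in>exponents_le d. \<bar>N \<alpha> \<beta> \<gamma>\<bar>))"
  have bound: "\<bar>c' \<alpha> t\<bar> \<le> K * (\<Sum>\<beta>\<in>H. \<bar>c \<beta> t\<bar>)" if "\<alpha> \<in> H" "t \<in> {t0..tf}" for \<alpha> t
  proof -
    have "c' \<alpha> t = (\<Sum>\<beta>\<in>exponents_le d. c \<beta> t * L \<alpha> \<beta>)
        + (\<Sum>\<beta>\<in>exponents_le d. \<Sum>\<gamma>\<in>exponents_le d. c \<beta> t * c \<gamma> t * N \<alpha> \<beta> \<gamma>)"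
      unfolding L_def N_def
      by (rule hjb_polynomial_coeff_ode[OF sol \<open>t0 < tf\<close> that(2) rep, where c'="\<lambda>\<beta>. c' \<beta> t"])
         (use that c' in \<open>auto simp: H_def\<close>)
    also have "\<bar>\<dots>\<bar> \<le> ((\<Sum>\<beta>\<in>exponents_le d. \<bar>L \<alpha> \<beta>\<bar>)
        + C * (\<Sum>\<beta>\<in>exponents_le d. \<Sum>\<gamma>\<in>exponents_le d. \<bar>N \<alpha> \<beta> \<gamma>\<bar>)) * (\<Sum>\<beta>\<in>H. \<bar>c \<beta> t\<bar>)"
    proof (rule abs_linear_plus_quadratic_le)
      have \<alpha>: "\<alpha> \<in> exponents_le (2 * d + 2)" "3 \<le> total_degree \<alpha>"
        using \<open>\<alpha> \<in> H\<close> by (auto simp: H_def exponents_le_def)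
      fix \<beta> \<gamma>
      assume "\<beta> \<in> exponents_le d - H"
      then have \<beta>: "total_degree \<beta> \<le> 2"
        by (auto simp: H_def)
      then show "L \<alpha> \<beta> = 0"
        unfolding L_def using \<alpha> by (simp add: poly_coeff_eq_0[OF poly_deg_le_hjb_linear_term])
      assume "\<gamma> \<in> exponents_le d - H"
      then have "total_degree \<gamma> \<le> 2"
        by (auto simp: H_def)
      with \<beta> show "N \<alpha> \<beta> \<gamma> = 0"
        unfolding N_def using \<alpha> by (simp add: poly_coeff_eq_0[OF poly_deg_le_hjb_quadratic_term])
    qed (use C \<open>t \<in> {t0..tf}\<close> in \<open>auto simp: H_def\<close>)
    also have "\<dots> \<le> K * (\<Sum>\<beta>\<in>H. \<bar>c \<beta> t\<bar>)"
      unfolding K_def using \<open>\<alpha> \<in> H\<close> \<open>C \<ge> 0\<close>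
      by (intro mult_right_mono member_le_sum) (auto simp: H_def sum_nonneg)
    finally show ?thesis .
  qed
  have final: "c \<beta> tf = 0" if "\<beta> \<in> H" for \<beta>
  proof (rule monomial_coeff_eq_0_above_degree)
    show "poly_deg_le 2 (\<lambda>l. J l tf)"
      unfolding terminal by (intro poly_deg_le_cmult poly_deg_le_quadratic_form)
    show "J l tf = (\<Sum>\<beta>\<in>exponents_le d. c \<beta> tf * monomial \<beta> l)" for l
      using rep \<open>t0 < tf\<close> by simp
  qed (use that in \<open>auto simp: H_def\<close>)
  have "finite H" "\<alpha> \<in> H"
    using assms(5,6) by (simp_all add: H_def)
  moreover have "(c \<beta> has_real_derivative c' \<beta> t) (at t within {t0..tf})"
    if "\<beta> \<in> H" "t \<in> {t0..tf}" for \<beta> t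
    using that by (intro c') (simp_all add: H_def)
  ultimately show ?thesis
    using ode_system_vanishes_backward[where A=H and x=c and x'=c' and K=K, OF _ _ bound final]
      \<open>t \<in> {t0..tf}\<close> by blast
qed

section \<open>Quadratic solutions of the HJB equation and the Riccati equations\<close>

lemma transpose_nth: "transpose A $ i $ j = A $ j $ i"
  by (simp add: transpose_def)

lemma transpose_diff: "transpose (A - C) = transpose A - transpose (C :: 'a::ab_group_add^'n^'m)"
  by (simp add: vec_eq_iff transpose_def)

lemma matrix_diff_rdistrib: "((A::real^'n^'m) - C) ** D = A ** D - C ** D"
  by (simp add: vec_eq_iff matrix_matrix_mult_def sum_subtractf left_diff_distrib)

lemma matrix_diff_ldistrib: "(D::real^'n^'m) ** (A - C) = D ** A - D ** C"
  by (simp add: vec_eq_iff matrix_matrix_mult_def sum_subtractf right_diff_distrib)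

lemma sum_delta_mult:
  fixes i :: "'n::finite"
  shows "(\<Sum>j\<in>UNIV. (if i = j then k else 0) * f j) = k * (f i :: real)"
    and "(\<Sum>j\<in>UNIV. (if j = i then k else 0) * f j) = k * f i"
proof -
  have "(if i = j then k else 0) * f j = (if j = i then k * f j else 0)"
    "(if j = i then k else 0) * f j = (if j = i then k * f j else 0)" for j
    by auto
  then show "(\<Sum>j\<in>UNIV. (if i = j then k else 0) * f j) = k * f i"
    "(\<Sum>j\<in>UNIV. (if j = i then k else 0) * f j) = k * f i"
    by (simp_all add: sum.delta)
qed

lemma mat_matrix_mult: "mat k ** (A::real^'n^'m) = k *\<^sub>R A"
  by (simp add: vec_eq_iff matrix_matrix_mult_def mat_def sum_delta_mult)

lemma matrix_mult_mat: "(A::real^'n^'m) ** mat k = k *\<^sub>R A"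
  by (simp add: vec_eq_iff matrix_matrix_mult_def mat_def sum_delta_mult mult.commute[of "A $ _ $ _"])

lemma mat_matrix_vector_mult: "mat k *v (x::real^'n) = k *\<^sub>R x"
  by (simp add: vec_eq_iff matrix_vector_mult_def mat_def sum_delta_mult)

lemma inner_matrix_transpose: "(x::real^'m) \<bullet> ((A::real^'n^'m) *v y) = (transpose A *v x) \<bullet> y"
  by (metis dot_lmul_matrix transpose_matrix_vector)

lemma inner_matrix_symmetric:
  "transpose (A::real^'n^'n) = A \<Longrightarrow> (x::real^'n) \<bullet> (A *v y) = y \<bullet> (A *v x)"
  by (metis inner_matrix_transpose inner_commute)

lemma axis_inner_matrix_axis: "axis i (1::real) \<bullet> ((A::real^'n^'m) *v axis j 1) = A $ i $ j"
  by (simp add: inner_axis' matrix_vector_mult_basis column_def)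

lemma matrix_inv_symmetric:
  assumes "transpose S = S" "invertible (S::real^'n^'n)"
  shows "transpose (matrix_inv S) = matrix_inv S"
proof -
  have inv: "S ** matrix_inv S = mat 1"
    using assms(2) unfolding invertible_def matrix_inv_def by (rule someI2_ex) simp
  then have "transpose (S ** matrix_inv S) = mat 1"
    by simp
  then have "transpose (matrix_inv S) ** S = mat 1"
    using assms(1) by (simp add: matrix_transpose_mul)
  have "transpose (matrix_inv S) = transpose (matrix_inv S) ** (S ** matrix_inv S)"
    by (simp add: inv)
  also have "\<dots> = matrix_inv S"
    by (simp add: matrix_mul_assoc \<open>transpose (matrix_inv S) ** S = mat 1\<close>)
  finally show ?thesis .
qed

lemma diag_vec_transpose_mult: "diag_vec (transpose B ** H ** B) $ i = col B i \<bullet> ((H::real^'n^'n) *v col B i)"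
  by (simp add: diag_vec_def col_def matrix_matrix_mult_def matrix_vector_mult_def inner_vec_def
      transpose_def sum_distrib_left sum_distrib_right mult_ac) (subst sum.swap, simp add: mult_ac)

lemma transpose_matrix_vector_nth: "(transpose B *v (w::real^'n)) $ i = col B i \<bullet> w"
  by (simp add: col_def matrix_vector_mult_def inner_vec_def transpose_def mult.commute)

lemma bounded_linear_axis: "bounded_linear (axis i :: 'a::real_normed_vector \<Rightarrow> 'a^'n)"
proof (rule bounded_linear_intro[where K=1])
  show "axis i (x + y) = (axis i x + axis i y :: 'a^'n)" for x y
    by (simp add: vec_eq_iff axis_def)
  show "axis i (r *\<^sub>R x) = (r *\<^sub>R axis i x :: 'a^'n)" for r x
    by (simp add: vec_eq_iff axis_def)
  have "(\<Sum>j\<in>UNIV. (norm ((axis i x :: 'a^'n) $ j))\<^sup>2) = (\<Sum>j\<in>UNIV. if j = i then (norm x)\<^sup>2 else 0)" for x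
    by (intro sum.cong) (auto simp: axis_def)
  then show "norm (axis i x :: 'a^'n) \<le> norm x * 1" for x
    by (simp add: norm_vec_def L2_set_def)
qed

lemma has_vector_derivative_componentwise:
  fixes f :: "real \<Rightarrow> 'a::real_normed_vector^'n"
  assumes "\<And>i. ((\<lambda>s. f s $ i) has_vector_derivative f' $ i) F"
  shows "(f has_vector_derivative f') F"
proof -
  have sum_axis: "x = (\<Sum>i\<in>UNIV. axis i (x $ i))" for x :: "'a^'n"
    by (simp add: vec_eq_iff axis_def sum_component if_distrib sum.delta cong: if_cong)
  have "((\<lambda>s. \<Sum>i\<in>UNIV. axis i (f s $ i)) has_vector_derivative (\<Sum>i\<in>UNIV. axis i (f' $ i))) F"
    by (intro has_vector_derivative_sum bounded_linear.has_vector_derivative[OF bounded_linear_axis] assms)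
  then show ?thesis
    by (simp flip: sum_axis)
qed

lemma bounded_linear_quadratic_form_matrix: "bounded_linear (\<lambda>M::real^'n^'n. l \<bullet> (M *v l))"
proof -
  have "linear (\<lambda>M::real^'n^'n. l \<bullet> (M *v l))"
    by (rule linearI) (simp_all add: matrix_vector_mult_add_rdistrib inner_add_right
        flip: scaleR_matrix_vector_assoc)
  then show ?thesis
    by (simp add: linear_conv_bounded_linear)
qed

definition is_quadratic :: "(real^'n \<Rightarrow> real) \<Rightarrow> bool" where
  "is_quadratic q \<longleftrightarrow> (\<exists>a b (M::real^'n^'n). \<forall>l. q l = a + b \<bullet> l + l \<bullet> (M *v l))"

lemma is_quadratic_const: "is_quadratic (\<lambda>l. a)"
  unfolding is_quadratic_def by (intro exI[of _ a] exI[of _ 0]) simp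

lemma is_quadratic_cmult:
  assumes "is_quadratic q"
  shows "is_quadratic (\<lambda>l. c * q l)"
proof -
  obtain a b M where "\<forall>l. q l = a + b \<bullet> l + l \<bullet> (M *v l)"
    using assms unfolding is_quadratic_def by blast
  then show ?thesis
    unfolding is_quadratic_def
    by (intro exI[of _ "c * a"] exI[of _ "c *\<^sub>R b"] exI[of _ "c *\<^sub>R M"])
       (simp add: algebra_simps flip: scaleR_matrix_vector_assoc)
qed

lemma is_quadratic_add:
  assumes "is_quadratic p" "is_quadratic q"
  shows "is_quadratic (\<lambda>l. p l + q l)"
proof -
  obtain a b M a' b' M' where "\<forall>l. p l = a + b \<bullet> l + l \<bullet> (M *v l)"
    "\<forall>l. q l = a' + b' \<bullet> l + l \<bullet> (M' *v l)"
    using assms unfolding is_quadratic_def by blast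
  then show ?thesis
    unfolding is_quadratic_def
    by (intro exI[of _ "a + a'"] exI[of _ "b + b'"] exI[of _ "M + M'"])
       (simp add: inner_add_left inner_add_right matrix_vector_mult_add_rdistrib)
qed

lemma is_quadratic_sum:
  "finite A \<Longrightarrow> (\<And>x. x \<in> A \<Longrightarrow> is_quadratic (q x)) \<Longrightarrow> is_quadratic (\<lambda>l. \<Sum>x\<in>A. q x l)"
  by (induction A rule: finite_induct) (auto intro: is_quadratic_const is_quadratic_add)

lemma is_quadratic_monomial:
  fixes \<alpha> :: "'n::finite \<Rightarrow> nat"
  assumes "total_degree \<alpha> \<le> 2"
  shows "is_quadratic (monomial \<alpha>)"
proof -
  consider "total_degree \<alpha> = 0" | "total_degree \<alpha> = Suc 0" | "total_degree \<alpha> = Suc (Suc 0)"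
    using assms by linarith
  then show ?thesis
  proof cases
    case 1
    then have "monomial \<alpha> = (\<lambda>l. 1)"
      by (simp add: monomial_total_degree_0 fun_eq_iff)
    then show ?thesis
      by (simp add: is_quadratic_const)
  next
    case 2
    then obtain i \<alpha>' where "total_degree \<alpha>' = 0" "\<And>l. monomial \<alpha> l = l $ i * monomial \<alpha>' l"
      using monomial_total_degree_Suc by blast
    then have "monomial \<alpha> l = 0 + axis i 1 \<bullet> l + l \<bullet> (0 *v l)" for l
      by (simp add: monomial_total_degree_0 inner_axis')
    then show ?thesis
      unfolding is_quadratic_def by blast
  next
    case 3
    then obtain i \<alpha>' where \<alpha>': "total_degree \<alpha>' = Suc 0" "\<And>l. monomial \<alpha> l = l $ i * monomial \<alpha>' l"
      using monomial_total_degree_Suc by blast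
    then obtain j \<alpha>'' where \<alpha>'': "total_degree \<alpha>'' = 0" "\<And>l. monomial \<alpha>' l = l $ j * monomial \<alpha>'' l"
      using monomial_total_degree_Suc by blast
    define M :: "real^'n^'n" where "M = (\<chi> p q. if p = i \<and> q = j then 1 else 0)"
    have "M *v l = (\<chi> p. if p = i then l $ j else 0)" for l
      by (simp add: M_def vec_eq_iff matrix_vector_mult_def sum_delta_mult)
    then have "l \<bullet> (M *v l) = l $ i * l $ j" for l
      by (simp add: inner_vec_def if_distrib sum.delta cong: if_cong)
    then have "monomial \<alpha> l = 0 + 0 \<bullet> l + l \<bullet> (M *v l)" for l
      using \<alpha>'(2) \<alpha>'' by (simp add: monomial_total_degree_0)
    then show ?thesis
      unfolding is_quadratic_def by blast
  qed
qed

definition difference_hessian :: "(real^'n \<Rightarrow> real) \<Rightarrow> real^'n^'n" where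
  "difference_hessian q = (\<chi> i j. q (axis i 1 + axis j 1) - q (axis i 1) - q (axis j 1) + q 0)"

definition difference_gradient :: "(real^'n \<Rightarrow> real) \<Rightarrow> real^'n" where
  "difference_gradient q = (\<chi> i. q (axis i 1) - q 0 - 1/2 * difference_hessian q $ i $ i)"

lemma transpose_difference_hessian: "transpose (difference_hessian q) = difference_hessian q"
  by (simp add: vec_eq_iff transpose_def difference_hessian_def add.commute)

lemma difference_hessian_quadratic:
  assumes q: "\<And>l. q l = a + b \<bullet> l + l \<bullet> (M *v l)"
  shows "difference_hessian q = M + transpose M"
proof -
  have "(axis i 1 + axis j 1) \<bullet> (M *v (axis i 1 + axis j 1))
      = M $ i $ i + M $ i $ j + M $ j $ i + M $ j $ j" for i j
    by (simp add: matrix_vector_right_distrib inner_add_left inner_add_right axis_inner_matrix_axis)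
  then show ?thesis
    using q by (simp add: vec_eq_iff difference_hessian_def transpose_def inner_add_right
        axis_inner_matrix_axis inner_axis)
qed

lemma difference_gradient_quadratic:
  assumes q: "\<And>l. q l = a + b \<bullet> l + l \<bullet> (M *v l)"
  shows "difference_gradient q = b"
  using q by (simp add: vec_eq_iff difference_gradient_def difference_hessian_quadratic[OF q]
      transpose_def inner_axis axis_inner_matrix_axis)

lemma quadratic_normal_form:
  assumes q: "\<And>l. q l = a + b \<bullet> l + l \<bullet> (M *v l)"
  shows "q l = q 0 + difference_gradient q \<bullet> l + 1/2 * (l \<bullet> (difference_hessian q *v l))"
proof -
  have "l \<bullet> (difference_hessian q *v l) = 2 * (l \<bullet> (M *v l))"
    using inner_matrix_transpose[of l M l]
    by (simp add: difference_hessian_quadratic[OF q] matrix_vector_mult_add_rdistrib inner_add_right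
        inner_commute)
  then show ?thesis
    using q[of l] q[of 0] by (simp add: difference_gradient_quadratic[OF q])
qed

lemma quadratic_identity_zero:
  fixes X :: "real^'n^'n"
  assumes zero: "\<And>l. \<kappa> + a \<bullet> l + l \<bullet> (X *v l) = 0"
  shows "a = 0" and "X $ i $ j + X $ j $ i = 0"
proof -
  have "\<kappa> = 0"
    using zero[of 0] by simp
  have neg: "X *v (- v) = - (X *v v)" for v
    by (simp add: vec_eq_iff matrix_vector_mult_def sum_negf)
  have "a $ i + X $ i $ i = 0" "- a $ i + X $ i $ i = 0" for i
    using zero[of "axis i 1"] zero[of "- axis i 1"] \<open>\<kappa> = 0\<close>
    by (simp_all add: inner_axis inner_axis' neg matrix_vector_mult_basis column_def)
  then have a: "a $ i = 0" and diag: "X $ i $ i = 0" for i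
    by (smt (verit))+
  then show "a = 0"
    by (simp add: vec_eq_iff)
  show "X $ i $ j + X $ j $ i = 0"
    using zero[of "axis i 1 + axis j 1"] \<open>\<kappa> = 0\<close> a diag
    by (simp add: matrix_vector_right_distrib inner_add_left inner_add_right axis_inner_matrix_axis inner_axis)
qed

lemma DeltaB_quadratic:
  assumes J: "\<And>l. J l t = f + g \<bullet> l + 1/2 * (l \<bullet> (H *v l))" and H: "transpose H = H"
  shows "DeltaB B J l t = transpose B *v (g + H *v l) + (1/2) *\<^sub>R diag_vec (transpose B ** H ** B)"
proof -
  have "J (l + b) t - J l t = b \<bullet> (g + H *v l) + 1/2 * (b \<bullet> (H *v b))" for b
  proof -
    have "J (l + b) t - J l t = g \<bullet> b + 1/2 * (l \<bullet> (H *v b) + b \<bullet> (H *v l) + b \<bullet> (H *v b))"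
      by (simp add: J inner_add_left inner_add_right matrix_vector_right_distrib algebra_simps)
    then show ?thesis
      using inner_matrix_symmetric[OF H, of l b] by (simp add: inner_add_right inner_commute algebra_simps)
  qed
  then show ?thesis
    by (simp add: vec_eq_iff DeltaB_def transpose_matrix_vector_nth diag_vec_transpose_mult
        del: transpose_matrix_vector)
qed

lemma quadratic_gradient:
  fixes H :: "real^'n^'n"
  assumes q: "\<And>l. q l = f + g \<bullet> l + 1/2 * (l \<bullet> (H *v l))" and H: "transpose H = H"
    and grad: "(q has_derivative (\<lambda>h. grad \<bullet> h)) (at l)"
  shows "grad = g + H *v l"
proof -
  have "((\<lambda>x. f + g \<bullet> x + 1/2 * (x \<bullet> (H *v x))) has_derivative
      (\<lambda>h. g \<bullet> h + 1/2 * (l \<bullet> (H *v h) + h \<bullet> (H *v l)))) (at l)"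
    using bounded_linear_imp_has_derivative[OF matrix_vector_mul_bounded_linear, of H]
    by (intro derivative_eq_intros) auto
  moreover have "(\<lambda>h. g \<bullet> h + 1/2 * (l \<bullet> (H *v h) + h \<bullet> (H *v l))) = (\<lambda>h. (g + H *v l) \<bullet> h)"
    using inner_matrix_symmetric[OF H, of l] by (auto simp: fun_eq_iff inner_add_left inner_add_right inner_commute)
  moreover have "q = (\<lambda>x. f + g \<bullet> x + 1/2 * (x \<bullet> (H *v x)))"
    using q by (intro ext)
  ultimately have "(q has_derivative (\<lambda>h. (g + H *v l) \<bullet> h)) (at l)"
    by simp
  with grad have "(\<lambda>h. grad \<bullet> h) = (\<lambda>h. (g + H *v l) \<bullet> h)"
    by (rule has_derivative_unique)
  then show ?thesis
    by (metis cart_eq_inner_axis vec_eq_iff inner_commute)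
qed

lemma has_vector_derivative_difference_hessian:
  assumes "\<And>l. ((\<lambda>s. J l s) has_real_derivative Jt l) (at t within T)"
  shows "((\<lambda>s. difference_hessian (\<lambda>l. J l s)) has_vector_derivative difference_hessian Jt) (at t within T)"
proof (intro has_vector_derivative_componentwise)
  fix i j
  have "((\<lambda>s. J (axis i 1 + axis j 1) s - J (axis i 1) s - J (axis j 1) s + J 0 s) has_real_derivative
      Jt (axis i 1 + axis j 1) - Jt (axis i 1) - Jt (axis j 1) + Jt 0) (at t within T)"
    by (intro DERIV_add DERIV_diff assms)
  then show "((\<lambda>s. difference_hessian (\<lambda>l. J l s) $ i $ j) has_vector_derivative
      difference_hessian Jt $ i $ j) (at t within T)"
    by (simp add: difference_hessian_def has_real_derivative_iff_has_vector_derivative)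
qed

lemma has_vector_derivative_difference_gradient:
  assumes "\<And>l. ((\<lambda>s. J l s) has_real_derivative Jt l) (at t within T)"
  shows "((\<lambda>s. difference_gradient (\<lambda>l. J l s)) has_vector_derivative difference_gradient Jt) (at t within T)"
proof (intro has_vector_derivative_componentwise)
  fix i
  have "((\<lambda>s. difference_hessian (\<lambda>l. J l s) $ i $ i) has_real_derivative difference_hessian Jt $ i $ i) (at t within T)"
    using bounded_linear.has_vector_derivative[OF bounded_linear_vec_nth
        bounded_linear.has_vector_derivative[OF bounded_linear_vec_nth
          has_vector_derivative_difference_hessian[OF assms]]]
    by (simp add: has_real_derivative_iff_has_vector_derivative)
  then have "((\<lambda>s. J (axis i 1) s - J 0 s - 1/2 * difference_hessian (\<lambda>l. J l s) $ i $ i) has_real_derivative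
      Jt (axis i 1) - Jt 0 - 1/2 * difference_hessian Jt $ i $ i) (at t within T)"
    by (intro DERIV_diff DERIV_cmult assms)
  then show "((\<lambda>s. difference_gradient (\<lambda>l. J l s) $ i) has_vector_derivative difference_gradient Jt $ i) (at t within T)"
    by (simp add: difference_gradient_def has_real_derivative_iff_has_vector_derivative)
qed

lemma quadratic_time_derivative:
  fixes J :: "real^'n \<Rightarrow> real \<Rightarrow> real"
  assumes "t0 < tf" "t \<in> {t0..tf}"
    and J: "\<And>l s. s \<in> {t0..tf} \<Longrightarrow> J l s = J 0 s + difference_gradient (\<lambda>l. J l s) \<bullet> l
                                + 1/2 * (l \<bullet> (difference_hessian (\<lambda>l. J l s) *v l))"
    and dJ: "\<And>l. ((\<lambda>s. J l s) has_real_derivative Jt l) (at t within {t0..tf})"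
  shows "Jt l = Jt 0 + difference_gradient Jt \<bullet> l + 1/2 * (l \<bullet> (difference_hessian Jt *v l))"
proof -
  have gradient: "((\<lambda>s. difference_gradient (\<lambda>l. J l s) \<bullet> l) has_real_derivative difference_gradient Jt \<bullet> l)
      (at t within {t0..tf})"
    using bounded_linear.has_vector_derivative[OF bounded_linear_inner_left
        has_vector_derivative_difference_gradient[OF dJ]]
    by (simp add: has_real_derivative_iff_has_vector_derivative)
  have hessian: "((\<lambda>s. l \<bullet> (difference_hessian (\<lambda>l. J l s) *v l)) has_real_derivative
      l \<bullet> (difference_hessian Jt *v l)) (at t within {t0..tf})"
    using bounded_linear.has_vector_derivative[OF bounded_linear_quadratic_form_matrix
        has_vector_derivative_difference_hessian[OF dJ]]
    by (simp add: has_real_derivative_iff_has_vector_derivative)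
  have "((\<lambda>s. J 0 s + difference_gradient (\<lambda>l. J l s) \<bullet> l
      + 1/2 * (l \<bullet> (difference_hessian (\<lambda>l. J l s) *v l))) has_real_derivative
      Jt 0 + difference_gradient Jt \<bullet> l + 1/2 * (l \<bullet> (difference_hessian Jt *v l))) (at t within {t0..tf})"
    by (intro DERIV_add DERIV_cmult dJ gradient hessian)
  then have "((\<lambda>s. J l s) has_real_derivative
      Jt 0 + difference_gradient Jt \<bullet> l + 1/2 * (l \<bullet> (difference_hessian Jt *v l))) (at t within {t0..tf})"
  proof (rule has_field_derivative_transform_within[OF _ zero_less_one \<open>t \<in> {t0..tf}\<close>])
    fix s
    assume "s \<in> {t0..tf}"
    then show "J 0 s + difference_gradient (\<lambda>l. J l s) \<bullet> l
        + 1/2 * (l \<bullet> (difference_hessian (\<lambda>l. J l s) *v l)) = J l s"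
      by (rule J[symmetric])
  qed
  with dJ show ?thesis
    using assms(1,2) by (intro has_real_derivative_unique_Icc)
qed

lemma hjb_quadratic_expansion:
  fixes H H' Si Q B :: "real^'n^'n" and g g' a l :: "real^'n"
  assumes H: "transpose H = H" and Si: "transpose Si = Si"
  defines "v0 \<equiv> (1/2) *\<^sub>R diag_vec (transpose B ** H ** B)"
    and "P \<equiv> B ** Si ** transpose B"
    and "\<Delta> \<equiv> transpose B *v (g + H *v l) + (1/2) *\<^sub>R diag_vec (transpose B ** H ** B)"
  shows "(f' + g' \<bullet> l + 1/2 * (l \<bullet> (H' *v l))) + (\<omega> *\<^sub>R a - \<omega> *\<^sub>R l) \<bullet> (g + H *v l) + l \<bullet> \<Delta>
           - 1/2 * (l \<bullet> (Q *v l)) - 1/2 * (\<Delta> \<bullet> (Si *v \<Delta>))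
       = (f' + \<omega> * (a \<bullet> g) - 1/2 * (g \<bullet> (P *v g)) - g \<bullet> (B *v (Si *v v0)) - 1/2 * (v0 \<bullet> (Si *v v0)))
         + (g' + \<omega> *\<^sub>R (H *v a) - \<omega> *\<^sub>R g + transpose B *v g + v0
            - H *v (P *v g) - H *v (B *v (Si *v v0))) \<bullet> l
         + l \<bullet> (((1/2) *\<^sub>R H' - \<omega> *\<^sub>R H + transpose B ** H - (1/2) *\<^sub>R Q - (1/2) *\<^sub>R (H ** P ** H)) *v l)"
proof -
  define u where "u = g + H *v l"
  define w where "w = transpose B *v u"
  have swap: "(H *v x) \<bullet> y = (H *v y) \<bullet> x" for x y
    by (metis H inner_commute inner_matrix_symmetric)
  have P_vec: "P *v x = B *v (Si *v (transpose B *v x))" for x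
    by (simp only: P_def matrix_vector_mul_assoc matrix_mul_assoc)
  have P_sym: "transpose P = P"
    by (simp add: P_def matrix_transpose_mul Si matrix_mul_assoc)
  have Bt: "(transpose B *v x) \<bullet> z = x \<bullet> (B *v z)" for x z
    by (simp add: inner_matrix_transpose)
  have drift: "(\<omega> *\<^sub>R a - \<omega> *\<^sub>R l) \<bullet> u
      = \<omega> * (a \<bullet> g) + \<omega> * ((H *v a) \<bullet> l) - \<omega> * (g \<bullet> l) - \<omega> * (l \<bullet> (H *v l))"
    using inner_matrix_symmetric[OF H, of a l]
    by (simp add: u_def inner_diff_left inner_add_right inner_commute[of l g] inner_commute[of l] algebra_simps)
  have jump: "l \<bullet> (w + v0) = (transpose B *v g) \<bullet> l + v0 \<bullet> l + l \<bullet> (transpose B *v (H *v l))"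
    by (simp add: w_def u_def matrix_vector_right_distrib inner_add_right inner_commute)
  have "w \<bullet> (Si *v w) = u \<bullet> (P *v u)"
    unfolding w_def Bt P_vec ..
  also have "\<dots> = g \<bullet> (P *v g) + 2 * ((H *v (P *v g)) \<bullet> l) + l \<bullet> (H *v (P *v (H *v l)))"
    using inner_matrix_symmetric[OF P_sym, of g "H *v l"] swap[of l "P *v g"] swap[of l "P *v (H *v l)"]
    by (simp add: u_def matrix_vector_right_distrib inner_add_left inner_add_right inner_commute)
  finally have quad1: "w \<bullet> (Si *v w) = g \<bullet> (P *v g) + 2 * ((H *v (P *v g)) \<bullet> l) + l \<bullet> (H *v (P *v (H *v l)))" .
  have quad2: "w \<bullet> (Si *v v0) = g \<bullet> (B *v (Si *v v0)) + (H *v (B *v (Si *v v0))) \<bullet> l"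
    using swap[of l "B *v (Si *v v0)"] by (simp add: w_def u_def Bt inner_add_left del: transpose_matrix_vector)
  have "(w + v0) \<bullet> (Si *v (w + v0)) = w \<bullet> (Si *v w) + 2 * (w \<bullet> (Si *v v0)) + v0 \<bullet> (Si *v v0)"
    using inner_matrix_symmetric[OF Si, of v0 w]
    by (simp add: matrix_vector_right_distrib inner_add_left inner_add_right)
  moreover have "l \<bullet> (((1/2) *\<^sub>R H' - \<omega> *\<^sub>R H + transpose B ** H - (1/2) *\<^sub>R Q - (1/2) *\<^sub>R (H ** P ** H)) *v l)
      = 1/2 * (l \<bullet> (H' *v l)) - \<omega> * (l \<bullet> (H *v l)) + l \<bullet> (transpose B *v (H *v l))
        - 1/2 * (l \<bullet> (Q *v l)) - 1/2 * (l \<bullet> (H *v (P *v (H *v l))))"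
    by (simp add: matrix_vector_mult_add_rdistrib matrix_vector_mult_diff_rdistrib inner_add_right
        inner_diff_right matrix_vector_mul_assoc[symmetric] flip: scaleR_matrix_vector_assoc)
  moreover have "(g' + \<omega> *\<^sub>R (H *v a) - \<omega> *\<^sub>R g + transpose B *v g + v0
        - H *v (P *v g) - H *v (B *v (Si *v v0))) \<bullet> l
      = g' \<bullet> l + \<omega> * ((H *v a) \<bullet> l) - \<omega> * (g \<bullet> l) + (transpose B *v g) \<bullet> l + v0 \<bullet> l
        - (H *v (P *v g)) \<bullet> l - (H *v (B *v (Si *v v0))) \<bullet> l"
    by (simp add: inner_add_left inner_diff_left)
  ultimately show ?thesis
    using drift jump quad1 quad2 unfolding \<Delta>_def v0_def[symmetric] w_def[symmetric] u_def[symmetric]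
    by linarith
qed

lemma hjb_quadratic_riccati:
  fixes H H' Si Q B :: "real^'n^'n" and g g' lam0 :: "real^'n"
  assumes H: "transpose H = H" and H': "transpose H' = H'"
    and Si: "transpose Si = Si" and Q: "transpose Q = Q"
  defines "\<Delta> \<equiv> \<lambda>l. transpose B *v (g + H *v l) + (1/2) *\<^sub>R diag_vec (transpose B ** H ** B)"
  assumes zero: "\<And>l. 0 = (f' + g' \<bullet> l + 1/2 * (l \<bullet> (H' *v l))) + (\<omega> *\<^sub>R lam0 - \<omega> *\<^sub>R l) \<bullet> (g + H *v l)
      + l \<bullet> \<Delta> l - 1/2 * (l \<bullet> (Q *v l)) - 1/2 * (\<Delta> l \<bullet> (Si *v \<Delta> l))"
  shows "H' = transpose (mat \<omega> - B) ** H + H ** (mat \<omega> - B) + H ** B ** Si ** transpose B ** H + Q"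
    and "g' = (mat \<omega> - transpose B + H ** B ** Si ** transpose B) *v g - \<omega> *\<^sub>R (H *v lam0)
        + (1/2) *\<^sub>R ((H ** B ** Si - mat 1) *v diag_vec (transpose B ** H ** B))"
proof -
  define v0 where "v0 = (1/2) *\<^sub>R diag_vec (transpose B ** H ** B)"
  define P where "P = B ** Si ** transpose B"
  define X where "X = (1/2) *\<^sub>R H' - \<omega> *\<^sub>R H + transpose B ** H - (1/2) *\<^sub>R Q - (1/2) *\<^sub>R (H ** P ** H)"
  define \<alpha> where "\<alpha> = g' + \<omega> *\<^sub>R (H *v lam0) - \<omega> *\<^sub>R g + transpose B *v g + v0
      - H *v (P *v g) - H *v (B *v (Si *v v0))"
  define \<kappa> where "\<kappa> = f' + \<omega> * (lam0 \<bullet> g) - 1/2 * (g \<bullet> (P *v g)) - g \<bullet> (B *v (Si *v v0))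
      - 1/2 * (v0 \<bullet> (Si *v v0))"
  have "\<kappa> + \<alpha> \<bullet> l + l \<bullet> (X *v l) = 0" for l
    using zero[of l] hjb_quadratic_expansion[OF H Si, where f'=f' and g'=g' and l=l and H'=H'
        and \<omega>=\<omega> and a=lam0 and g=g and Q=Q and B=B]
    unfolding \<kappa>_def \<alpha>_def X_def v0_def P_def \<Delta>_def by linarith
  then have \<alpha>: "\<alpha> = 0" and X: "X $ i $ j + X $ j $ i = 0" for i j
    by (rule quadratic_identity_zero)+
  have g1: "(mat \<omega> - transpose B + H ** B ** Si ** transpose B) *v g
      = \<omega> *\<^sub>R g - transpose B *v g + H *v (P *v g)"
    by (simp add: P_def matrix_vector_mult_add_rdistrib matrix_vector_mult_diff_rdistrib
        mat_matrix_vector_mult matrix_vector_mul_assoc[symmetric] del: transpose_matrix_vector)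
  have g2: "(1/2) *\<^sub>R ((H ** B ** Si - mat 1) *v diag_vec (transpose B ** H ** B))
      = H *v (B *v (Si *v v0)) - v0"
    by (simp add: v0_def matrix_vector_mult_diff_rdistrib mat_matrix_vector_mult matrix_scaleR_vector_ac
        matrix_vector_mul_assoc[symmetric] scaleR_diff_right flip: scaleR_matrix_vector_assoc)
  have "g' = g' - \<alpha>"
    using \<alpha> by simp
  then show "g' = (mat \<omega> - transpose B + H ** B ** Si ** transpose B) *v g - \<omega> *\<^sub>R (H *v lam0)
      + (1/2) *\<^sub>R ((H ** B ** Si - mat 1) *v diag_vec (transpose B ** H ** B))"
    unfolding g1 g2 \<alpha>_def by (simp add: algebra_simps)
  have sym: "A $ j $ i = A $ i $ j" if "transpose A = A" for A :: "real^'n^'n" and i j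
    using that by (metis transpose_nth)
  have "transpose (H ** P ** H) = H ** P ** H"
    by (simp add: P_def matrix_transpose_mul H Si matrix_mul_assoc)
  moreover have "transpose (transpose B ** H) = H ** B"
    by (simp add: matrix_transpose_mul H)
  ultimately have "H' $ i $ j = (\<omega> *\<^sub>R H - transpose B ** H + (\<omega> *\<^sub>R H - H ** B) + H ** P ** H + Q) $ i $ j"
    for i j
    using X[of i j] sym[OF H', of i j] sym[OF H, of i j] sym[OF Q, of i j]
      sym[of "H ** P ** H" i j] transpose_nth[of "transpose B ** H" i j]
    unfolding X_def by simp
  then show "H' = transpose (mat \<omega> - B) ** H + H ** (mat \<omega> - B) + H ** B ** Si ** transpose B ** H + Q"
    by (simp add: vec_eq_iff transpose_diff matrix_diff_rdistrib matrix_diff_ldistrib mat_matrix_mult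
        matrix_mult_mat P_def matrix_mul_assoc)
qed

lemma hjb_quadratic_solution_riccati:
  fixes J :: "real^'n \<Rightarrow> real \<Rightarrow> real" and B Q Si F :: "real^'n^'n"
  assumes sol: "hjb_solution \<omega> lam0 B Q Si J {t0..tf}" and "t0 < tf"
    and Q: "transpose Q = Q" and Si: "transpose Si = Si" and F: "transpose F = F"
    and quad: "\<And>t. t \<in> {t0..tf} \<Longrightarrow> is_quadratic (\<lambda>l. J l t)"
    and terminal: "\<And>l. J l tf = - (1/2) * (l \<bullet> (F *v l))"
  shows "\<exists>(f :: real \<Rightarrow> real) (g :: real \<Rightarrow> real^'n) (H :: real \<Rightarrow> real^'n^'n).
      H tf = - F \<and> g tf = 0 \<and>
      (\<forall>t\<in>{t0..tf}. (H has_vector_derivative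
          (transpose (mat \<omega> - B) ** H t + H t ** (mat \<omega> - B)
           + H t ** B ** Si ** transpose B ** H t + Q))
         (at t within {t0..tf})) \<and>
      (\<forall>t\<in>{t0..tf}. (g has_vector_derivative
          ((mat \<omega> - transpose B + H t ** B ** Si ** transpose B) *v g t
           - \<omega> *\<^sub>R (H t *v lam0)
           + (1/2) *\<^sub>R ((H t ** B ** Si - mat 1)
                         *v diag_vec (transpose B ** H t ** B))))
         (at t within {t0..tf})) \<and>
      (\<forall>l. \<forall>t\<in>{t0..tf}. J l t = f t + g t \<bullet> l + (1/2) * (l \<bullet> (H t *v l)))"
proof -
  define H where "H t = difference_hessian (\<lambda>l. J l t)" for t
  define g where "g t = difference_gradient (\<lambda>l. J l t)" for t
  define Jt where "Jt l t = (SOME D. ((\<lambda>s. J l s) has_real_derivative D) (at t within {t0..tf}))" for l t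
  have dJ: "((\<lambda>s. J l s) has_real_derivative Jt l t) (at t within {t0..tf})" if t: "t \<in> {t0..tf}" for l t
  proof -
    obtain D where "((\<lambda>s. J l s) has_real_derivative D) (at t within {t0..tf})"
      using sol t by (rule hjb_solutionE)
    then show ?thesis
      unfolding Jt_def by (rule someI)
  qed
  have J: "J l t = J 0 t + g t \<bullet> l + 1/2 * (l \<bullet> (H t *v l))" if t: "t \<in> {t0..tf}" for l t
  proof -
    obtain a b M where "\<forall>l. J l t = a + b \<bullet> l + l \<bullet> (M *v l)"
      using quad[OF t] unfolding is_quadratic_def by blast
    then show ?thesis
      unfolding g_def H_def by (intro quadratic_normal_form) simp
  qed
  have H_sym: "transpose (H t) = H t" for t
    unfolding H_def by (rule transpose_difference_hessian)
  have riccati: "difference_hessian (\<lambda>l. Jt l t)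
        = transpose (mat \<omega> - B) ** H t + H t ** (mat \<omega> - B) + H t ** B ** Si ** transpose B ** H t + Q"
      "difference_gradient (\<lambda>l. Jt l t)
        = (mat \<omega> - transpose B + H t ** B ** Si ** transpose B) *v g t - \<omega> *\<^sub>R (H t *v lam0)
          + (1/2) *\<^sub>R ((H t ** B ** Si - mat 1) *v diag_vec (transpose B ** H t ** B))"
    if t: "t \<in> {t0..tf}" for t
  proof -
    have zero: "0 = (Jt 0 t + difference_gradient (\<lambda>l. Jt l t) \<bullet> l
        + 1/2 * (l \<bullet> (difference_hessian (\<lambda>l. Jt l t) *v l)))
        + (\<omega> *\<^sub>R lam0 - \<omega> *\<^sub>R l) \<bullet> (g t + H t *v l)
        + l \<bullet> (transpose B *v (g t + H t *v l) + (1/2) *\<^sub>R diag_vec (transpose B ** H t ** B))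
        - 1/2 * (l \<bullet> (Q *v l))
        - 1/2 * ((transpose B *v (g t + H t *v l) + (1/2) *\<^sub>R diag_vec (transpose B ** H t ** B))
           \<bullet> (Si *v (transpose B *v (g t + H t *v l) + (1/2) *\<^sub>R diag_vec (transpose B ** H t ** B))))"
      for l
    proof -
    obtain Jt' grad where Jt': "((\<lambda>s. J l s) has_real_derivative Jt') (at t within {t0..tf})"
      and grad: "((\<lambda>x. J x t) has_derivative (\<lambda>h. grad \<bullet> h)) (at l)"
      and eq: "0 = Jt' + (\<omega> *\<^sub>R lam0 - \<omega> *\<^sub>R l) \<bullet> grad + l \<bullet> DeltaB B J l t
         - (1/2) * (l \<bullet> (Q *v l)) - (1/2) * (DeltaB B J l t \<bullet> (Si *v DeltaB B J l t))"
      using sol t by (rule hjb_solutionE)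
    have "Jt' = Jt l t"
      using Jt' dJ[OF t] \<open>t0 < tf\<close> t by (rule has_real_derivative_unique_Icc[rotated 2])
    moreover have "Jt l t = Jt 0 t + difference_gradient (\<lambda>l. Jt l t) \<bullet> l
        + 1/2 * (l \<bullet> (difference_hessian (\<lambda>l. Jt l t) *v l))"
      using \<open>t0 < tf\<close> t J dJ[OF t] unfolding g_def H_def by (rule quadratic_time_derivative)
    moreover have "grad = g t + H t *v l"
      using J[OF t] H_sym grad by (rule quadratic_gradient)
    moreover have "DeltaB B J l t = transpose B *v (g t + H t *v l) + (1/2) *\<^sub>R diag_vec (transpose B ** H t ** B)"
      using J[OF t] H_sym by (rule DeltaB_quadratic)
    ultimately show ?thesis
      using eq by simp
    qed
    show "difference_hessian (\<lambda>l. Jt l t)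
        = transpose (mat \<omega> - B) ** H t + H t ** (mat \<omega> - B) + H t ** B ** Si ** transpose B ** H t + Q"
      using zero by (rule hjb_quadratic_riccati(1)[OF H_sym transpose_difference_hessian Si Q])
    show "difference_gradient (\<lambda>l. Jt l t)
        = (mat \<omega> - transpose B + H t ** B ** Si ** transpose B) *v g t - \<omega> *\<^sub>R (H t *v lam0)
          + (1/2) *\<^sub>R ((H t ** B ** Si - mat 1) *v diag_vec (transpose B ** H t ** B))"
      using zero by (rule hjb_quadratic_riccati(2)[OF H_sym transpose_difference_hessian Si Q])
  qed
  define M where "M = (\<chi> i j. - (1/2) * F $ i $ j)"
  have "M *v l = - (1/2) *\<^sub>R (F *v l)" for l
    by (simp add: M_def vec_eq_iff matrix_vector_mult_def sum_negf sum_divide_distrib)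
  then have J_tf: "J l tf = 0 + 0 \<bullet> l + l \<bullet> (M *v l)" for l
    by (simp add: terminal)
  have "F $ j $ i = F $ i $ j" for i j
    using F by (metis transpose_nth)
  then have "M + transpose M = - F"
    by (simp add: M_def vec_eq_iff transpose_def)
  show ?thesis
  proof (intro exI conjI ballI allI)
    show "H tf = - F"
      unfolding H_def difference_hessian_quadratic[OF J_tf] by fact
    show "g tf = 0"
      unfolding g_def difference_gradient_quadratic[OF J_tf] ..
    show "(H has_vector_derivative transpose (mat \<omega> - B) ** H t + H t ** (mat \<omega> - B)
        + H t ** B ** Si ** transpose B ** H t + Q) (at t within {t0..tf})" if "t \<in> {t0..tf}" for t
      using has_vector_derivative_difference_hessian[of J "\<lambda>l. Jt l t", OF dJ[OF that]] riccati(1)[OF that]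
      unfolding H_def by simp
    show "(g has_vector_derivative (mat \<omega> - transpose B + H t ** B ** Si ** transpose B) *v g t
        - \<omega> *\<^sub>R (H t *v lam0) + (1/2) *\<^sub>R ((H t ** B ** Si - mat 1) *v diag_vec (transpose B ** H t ** B)))
        (at t within {t0..tf})" if "t \<in> {t0..tf}" for t
      using has_vector_derivative_difference_gradient[of J "\<lambda>l. Jt l t", OF dJ[OF that]] riccati(2)[OF that]
      unfolding g_def by simp
    show "J l t = J 0 t + g t \<bullet> l + (1/2) * (l \<bullet> (H t *v l))" if "t \<in> {t0..tf}" for l t
      by (rule J[OF that])
  qed
qed

theorem lemma5:
  fixes B Q S F :: "real^'n^'n"
    and \<omega> t0 tf :: real
    and lam0 :: "real^'n"
    and J :: "real^'n \<Rightarrow> real \<Rightarrow> real"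
  assumes B_nonneg: "\<forall>i j. B $ i $ j \<ge> 0"
    and omega_nonneg: "\<omega> \<ge> 0"
    and lambda0_nonneg: "\<forall>i. lam0 $ i \<ge> 0"
    and Q_sym: "transpose Q = Q" and Q_nonneg: "\<forall>i j. Q $ i $ j \<ge> 0"
    and S_sym: "transpose S = S" and S_nonneg: "\<forall>i j. S $ i $ j \<ge> 0"
    and F_sym: "transpose F = F" and F_nonneg: "\<forall>i j. F $ i $ j \<ge> 0"
    and S_inv: "invertible S"
    and times: "t0 < tf"
    and J_poly: "poly_in_lambda J {t0..tf}"
    and HJB: "\<forall>l. \<forall>t\<in>{t0..tf}. \<exists>Jt grad.
        ((\<lambda>s. J l s) has_real_derivative Jt) (at t within {t0..tf}) \<and>
        ((\<lambda>x. J x t) has_derivative (\<lambda>h. grad \<bullet> h)) (at l) \<and>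
        0 = Jt + (\<omega> *\<^sub>R lam0 - \<omega> *\<^sub>R l) \<bullet> grad + l \<bullet> DeltaB B J l t
            - (1/2) * (l \<bullet> (Q *v l))
            - (1/2) * (DeltaB B J l t \<bullet> (matrix_inv S *v DeltaB B J l t))"
    and terminal: "\<forall>l. J l tf = - (1/2) * (l \<bullet> (F *v l))"
  shows "\<exists>(f :: real \<Rightarrow> real) (g :: real \<Rightarrow> real^'n) (H :: real \<Rightarrow> real^'n^'n).
      H tf = - F \<and> g tf = 0 \<and>
      (\<forall>t\<in>{t0..tf}. (H has_vector_derivative
          (transpose (mat \<omega> - B) ** H t + H t ** (mat \<omega> - B)
           + H t ** B ** matrix_inv S ** transpose B ** H t + Q))
         (at t within {t0..tf})) \<and>
      (\<forall>t\<in>{t0..tf}. (g has_vector_derivative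
          ((mat \<omega> - transpose B + H t ** B ** matrix_inv S ** transpose B) *v g t
           - \<omega> *\<^sub>R (H t *v lam0)
           + (1/2) *\<^sub>R ((H t ** B ** matrix_inv S - mat 1)
                         *v diag_vec (transpose B ** H t ** B))))
         (at t within {t0..tf})) \<and>
      (\<forall>l. \<forall>t\<in>{t0..tf}. J l t = f t + g t \<bullet> l + (1/2) * (l \<bullet> (H t *v l)))"
proof -
  obtain d c where rep: "\<And>l t. t \<in> {t0..tf} \<Longrightarrow> J l t = (\<Sum>\<alpha>\<in>exponents_le d. c \<alpha> t * monomial \<alpha> l)"
    using J_poly unfolding poly_in_lambda_def exponents_le_def total_degree_def monomial_def by blast
  have sol: "hjb_solution \<omega> lam0 B Q (matrix_inv S) J {t0..tf}"
    using HJB unfolding hjb_solution_def .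
  have "is_quadratic (\<lambda>l. J l t)" if t: "t \<in> {t0..tf}" for t
  proof -
    have "is_quadratic (\<lambda>l. c \<alpha> t * monomial \<alpha> l)" if \<alpha>: "\<alpha> \<in> exponents_le d" for \<alpha>
    proof (cases "3 \<le> total_degree \<alpha>")
      case True
      then have "c \<alpha> t = 0"
        using hjb_polynomial_high_coeffs_vanish[OF sol times rep terminal[rule_format] \<alpha> _ t] by blast
      then show ?thesis
        using is_quadratic_const[of 0] by simp
    next
      case False
      then show ?thesis
        by (intro is_quadratic_cmult is_quadratic_monomial) simp
    qed
    then show ?thesis
      unfolding rep[OF t] by (rule is_quadratic_sum[OF finite_exponents_le])
  qed
  then show ?thesis
    using hjb_quadratic_solution_riccati[OF sol times Q_sym matrix_inv_symmetric[OF S_sym S_inv] F_sym _ terminal[rule_format]]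
    by blast
qed

end
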